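(* Let $x\in\mathfrak{g}=\mathfrak{gl}(n+1,\mathbb{C})$ satisfy: (1) $x$ is regular nilpotent in $\mathfrak{g}$ and $x_n$ is regular nilpotent in $\mathfrak{g}_n$; and (2) $\mathfrak{z}_{\mathfrak{g}_n}(x_n)\cap\mathfrak{z}_{\mathfrak{g}}(x)=0$. Let $\mathfrak{b}$ be the unique Borel subalgebra of $\mathfrak{g}$ containing $x$. Then $\mathfrak{b}\in Q_{+,n+1}$ or $\mathfrak{b}\in Q_{-,n+1}$.
   Context: $n\ge1$. $\mathfrak{g}_n\cong\mathfrak{gl}(n,\mathbb{C})$ is embedded in $\mathfrak{g}$ as matrices supported in the upper left $n\times n$ corner, $x_n$ is the upper left $n\times n$ submatrix of $x$ (viewed in $\mathfrak{g}_n$), and $\mathfrak{z}$ denotes centralizers. $K_{n+1}=GL(n,\mathbb{C})\times GL(1,\mathbb{C})$ is the group of invertible block diagonal matrices with blocks of sizes $n$ and $1$, acting by conjugation on the flag variety $\mathcal{B}_{n+1}$ of $\mathfrak{g}$. $Q_{+,n+1}$ (resp. $Q_{-,n+1}$) is the $K_{n+1}$-orbit of the Borel subalgebra of upper (resp. lower) triangular matrices. *)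

theory Defs
  imports "Jordan_Normal_Form.Matrix"
begin

definition lie_bracket :: "complex mat \<Rightarrow> complex mat \<Rightarrow> complex mat" where
  "lie_bracket A B = A * B - B * A"

definition lin_comb :: "nat \<Rightarrow> complex list \<Rightarrow> complex mat list \<Rightarrow> complex mat" where
  "lin_comb m cs Ms = foldr (\<lambda>(c, M) acc. c \<cdot>\<^sub>m M + acc) (zip cs Ms) (0\<^sub>m m m)"

definition mat_span :: "nat \<Rightarrow> complex mat set \<Rightarrow> complex mat set" where
  "mat_span m S = {lin_comb m cs Ms | cs Ms. set Ms \<subseteq> S \<and> length cs = length Ms}"

definition lin_indep_mats :: "nat \<Rightarrow> complex mat list \<Rightarrow> bool" where
  "lin_indep_mats m Ms \<longleftrightarrow>
     (\<forall>cs. length cs = length Ms \<and> lin_comb m cs Ms = 0\<^sub>m m m \<longrightarrow> (\<forall>c \<in> set cs. c = 0))"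

definition mat_dim :: "nat \<Rightarrow> complex mat set \<Rightarrow> nat" where
  "mat_dim m V = Max {length Ms | Ms. set Ms \<subseteq> V \<and> lin_indep_mats m Ms}"

definition centralizer :: "nat \<Rightarrow> complex mat \<Rightarrow> complex mat set" where
  "centralizer m x = {y \<in> carrier_mat m m. lie_bracket y x = 0\<^sub>m m m}"

definition nilpotent_mat :: "nat \<Rightarrow> complex mat \<Rightarrow> bool" where
  "nilpotent_mat m x \<longleftrightarrow> x \<in> carrier_mat m m \<and> (\<exists>k. x ^\<^sub>m k = 0\<^sub>m m m)"

text \<open>Regular element of gl(m): dim of centralizer equals the rank m of gl(m).\<close>
definition regular_nilpotent :: "nat \<Rightarrow> complex mat \<Rightarrow> bool" where
  "regular_nilpotent m x \<longleftrightarrow> nilpotent_mat m x \<and> mat_dim m (centralizer m x) = m"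

definition upper_left :: "nat \<Rightarrow> complex mat \<Rightarrow> complex mat" where
  "upper_left n x = mat n n (\<lambda>(i, j). x $$ (i, j))"

definition embed_gl :: "nat \<Rightarrow> complex mat \<Rightarrow> complex mat" where
  "embed_gl n A = mat (Suc n) (Suc n) (\<lambda>(i, j). if i < n \<and> j < n then A $$ (i, j) else 0)"

definition lie_subalgebra :: "nat \<Rightarrow> complex mat set \<Rightarrow> bool" where
  "lie_subalgebra m b \<longleftrightarrow> b \<subseteq> carrier_mat m m \<and> 0\<^sub>m m m \<in> b
     \<and> (\<forall>A\<in>b. \<forall>B\<in>b. A + B \<in> b) \<and> (\<forall>c. \<forall>A\<in>b. c \<cdot>\<^sub>m A \<in> b)
     \<and> (\<forall>A\<in>b. \<forall>B\<in>b. lie_bracket A B \<in> b)"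

fun derived_series :: "nat \<Rightarrow> complex mat set \<Rightarrow> nat \<Rightarrow> complex mat set" where
  "derived_series m b 0 = b"
| "derived_series m b (Suc k) =
     mat_span m {lie_bracket A B | A B. A \<in> derived_series m b k \<and> B \<in> derived_series m b k}"

definition solvable_subalg :: "nat \<Rightarrow> complex mat set \<Rightarrow> bool" where
  "solvable_subalg m b \<longleftrightarrow> lie_subalgebra m b \<and> (\<exists>k. derived_series m b k = {0\<^sub>m m m})"

definition borel_subalg :: "nat \<Rightarrow> complex mat set \<Rightarrow> bool" where
  "borel_subalg m b \<longleftrightarrow> solvable_subalg m b \<and>
     (\<forall>c. solvable_subalg m c \<and> b \<subseteq> c \<longrightarrow> c = b)"

definition upper_borel :: "nat \<Rightarrow> complex mat set" where
  "upper_borel m = {A \<in> carrier_mat m m. \<forall>i j. j < i \<and> i < m \<longrightarrow> A $$ (i, j) = 0}"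

definition lower_borel :: "nat \<Rightarrow> complex mat set" where
  "lower_borel m = {A \<in> carrier_mat m m. \<forall>i j. i < j \<and> j < m \<longrightarrow> A $$ (i, j) = 0}"

text \<open>K_{n+1} = GL(n) x GL(1): invertible block-diagonal (n+1) x (n+1) matrices.\<close>
definition K_grp :: "nat \<Rightarrow> complex mat set" where
  "K_grp n = {k \<in> carrier_mat (Suc n) (Suc n). invertible_mat k \<and>
               (\<forall>i<n. k $$ (i, n) = 0 \<and> k $$ (n, i) = 0)}"

definition K_orbit :: "nat \<Rightarrow> complex mat set \<Rightarrow> complex mat set set" where
  "K_orbit n b = {{k * A * k' | A. A \<in> b} | k k'. k \<in> K_grp n \<and> k' \<in> carrier_mat (Suc n) (Suc n)
                    \<and> k * k' = 1\<^sub>m (Suc n) \<and> k' * k = 1\<^sub>m (Suc n)}"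

definition Q_plus :: "nat \<Rightarrow> complex mat set set" where
  "Q_plus n = K_orbit n (upper_borel (Suc n))"

definition Q_minus :: "nat \<Rightarrow> complex mat set set" where
  "Q_minus n = K_orbit n (lower_borel (Suc n))"

end

theory Submission
  imports Defs "Jordan_Normal_Form.Jordan_Normal_Form_Existence" "Jordan_Normal_Form.VS_Connect"
begin

text \<open>Write \<open>N = x\<^sub>n\<close>, and \<open>v\<close>, \<open>w\<^sup>T\<close> for the last column and last row of \<open>x\<close> without the
  corner entry. Since \<open>N\<close> is regular it is a single nilpotent Jordan block, so \<open>A = N ^ (n - 1) \<noteq> 0\<close>.
  If \<open>A v \<noteq> 0\<close>, the Krylov basis \<open>N ^ (n - 1) v, \<dots>, N v, v\<close> together with \<open>e\<^sub>n\<close> defines an element of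
  \<open>K = GL(n) \<times> GL(1)\<close> conjugating \<open>x\<close> to the principal nilpotent Jordan block \<open>J\<close>, so \<open>b\<close> is a
  \<open>K\<close>-conjugate of the upper triangular matrices. If \<open>A\<^sup>T w \<noteq> 0\<close>, the same applies to \<open>x\<^sup>T\<close>;
  transposing and conjugating by the reversal permutation, which exchanges upper and lower triangular
  matrices, makes \<open>b\<close> a \<open>K\<close>-conjugate of the lower triangular ones. Otherwise the embedding of \<open>A\<close>
  centralizes \<open>x\<close>, contradicting hypothesis (2).

  It remains that the only Borel subalgebra containing \<open>J\<close> is the upper triangular one. A solvable
  subalgebra containing \<open>J\<close> has \<open>ad J\<close>-stable derived series; descending it, the entries below the
  diagonal are pushed down by \<open>ad J\<close> until only the subdiagonal survives, where they are killed by a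
  recursion governed by the Cartan matrix of type \<open>A\<close>.\<close>

section \<open>Commutators of square matrices\<close>

lemma mult_carrier_mat_square[simp]:
  "A \<in> carrier_mat m m \<Longrightarrow> B \<in> carrier_mat m m \<Longrightarrow> A * B \<in> carrier_mat m m"
  by (rule mult_carrier_mat)

lemma minus_carrier_mat_square[simp]:
  "A \<in> carrier_mat m m \<Longrightarrow> B \<in> carrier_mat m m \<Longrightarrow> A - B \<in> carrier_mat m m"
  by (rule minus_carrier_mat)

lemma lie_bracket_carrier[simp]:
  "A \<in> carrier_mat m m \<Longrightarrow> B \<in> carrier_mat m m \<Longrightarrow> lie_bracket A B \<in> carrier_mat m m"
  unfolding lie_bracket_def by simp

lemma index_mult_mat_sum: "A \<in> carrier_mat m m \<Longrightarrow> B \<in> carrier_mat m m \<Longrightarrow> i < m \<Longrightarrow> j < m \<Longrightarrow>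
  (A * B) $$ (i,j) = (\<Sum>k<m. A $$ (i,k) * B $$ (k,j))"
  by (simp add: scalar_prod_def lessThan_atLeast0)

text \<open>Commutator identities are proved by \<open>algebra\<close> in an abstract ring and transferred to square
  matrices through the ring \<open>ring_mat\<close>.\<close>
abbreviation mat_ring :: "nat \<Rightarrow> complex mat ring" where "mat_ring m \<equiv> ring_mat TYPE(complex) m ()"

lemma a_minus_mat_ring:
  assumes "A \<in> carrier_mat m m" "B \<in> carrier_mat m m"
  shows "a_minus (mat_ring m) A B = A - B"
proof -
  interpret R: ring "mat_ring m" by (rule ring_mat)
  have "a_inv (mat_ring m) B = - B"
    by (rule R.minus_equality) (use assms in \<open>simp_all add: ring_mat_simps\<close>)
  thus ?thesis using assms by (simp add: a_minus_def ring_mat_simps minus_add_uminus_mat)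
qed

lemma (in ring) commutator_jacobi:
  assumes "x \<in> carrier R" "a \<in> carrier R" "b \<in> carrier R"
  shows "x \<otimes> (a \<otimes> b \<ominus> b \<otimes> a) \<ominus> (a \<otimes> b \<ominus> b \<otimes> a) \<otimes> x
    = ((x \<otimes> a \<ominus> a \<otimes> x) \<otimes> b \<ominus> b \<otimes> (x \<otimes> a \<ominus> a \<otimes> x))
      \<oplus> (a \<otimes> (x \<otimes> b \<ominus> b \<otimes> x) \<ominus> (x \<otimes> b \<ominus> b \<otimes> x) \<otimes> a)"
  using assms by algebra

lemma (in ring) commutator_add_right:
  assumes "x \<in> carrier R" "a \<in> carrier R" "b \<in> carrier R"
  shows "x \<otimes> (a \<oplus> b) \<ominus> (a \<oplus> b) \<otimes> x = (x \<otimes> a \<ominus> a \<otimes> x) \<oplus> (x \<otimes> b \<ominus> b \<otimes> x)"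
  using assms by algebra

lemma (in ring) commutator_conj:
  assumes "p \<in> carrier R" "q \<in> carrier R" "a \<in> carrier R" "b \<in> carrier R"
    and qp: "q \<otimes> p = \<one>"
  shows "p \<otimes> (a \<otimes> b \<ominus> b \<otimes> a) \<otimes> q
    = (p \<otimes> a \<otimes> q) \<otimes> (p \<otimes> b \<otimes> q) \<ominus> (p \<otimes> b \<otimes> q) \<otimes> (p \<otimes> a \<otimes> q)"
proof -
  have qpx: "q \<otimes> (p \<otimes> x) = x" if "x \<in> carrier R" for x
    using assms that by (simp add: m_assoc[symmetric] qp)
  have "(p \<otimes> c \<otimes> q) \<otimes> (p \<otimes> d \<otimes> q) = p \<otimes> (c \<otimes> d) \<otimes> q"
    if "c \<in> carrier R" "d \<in> carrier R" for c d
    using assms that by (simp add: m_assoc qpx)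
  moreover have "p \<otimes> (a \<otimes> b \<ominus> b \<otimes> a) \<otimes> q = p \<otimes> (a \<otimes> b) \<otimes> q \<ominus> p \<otimes> (b \<otimes> a) \<otimes> q"
    using assms by algebra
  ultimately show ?thesis using assms by simp
qed

lemma lie_bracket_jacobi:
  assumes "y \<in> carrier_mat m m" "A \<in> carrier_mat m m" "B \<in> carrier_mat m m"
  shows "lie_bracket y (lie_bracket A B) = lie_bracket (lie_bracket y A) B + lie_bracket A (lie_bracket y B)"
proof -
  interpret R: ring "mat_ring m" by (rule ring_mat)
  show ?thesis using R.commutator_jacobi[of y A B] assms unfolding lie_bracket_def
    by (simp add: ring_mat_simps a_minus_mat_ring)
qed

lemma lie_bracket_add_right:
  assumes "y \<in> carrier_mat m m" "A \<in> carrier_mat m m" "B \<in> carrier_mat m m"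
  shows "lie_bracket y (A + B) = lie_bracket y A + lie_bracket y B"
proof -
  interpret R: ring "mat_ring m" by (rule ring_mat)
  show ?thesis using R.commutator_add_right[of y A B] assms unfolding lie_bracket_def
    by (simp add: ring_mat_simps a_minus_mat_ring)
qed

lemma lie_bracket_smult_right:
  assumes "y \<in> carrier_mat m m" "A \<in> carrier_mat m m"
  shows "lie_bracket y (c \<cdot>\<^sub>m A) = c \<cdot>\<^sub>m lie_bracket y A"
  using assms unfolding lie_bracket_def
  by (simp add: mult_smult_distrib[of _ m m _ m] mult_smult_assoc_mat[of _ m m _ m])
     (rule eq_matI, auto simp: algebra_simps)

lemma lie_bracket_zero_right: "y \<in> carrier_mat m m \<Longrightarrow> lie_bracket y (0\<^sub>m m m) = 0\<^sub>m m m"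
  unfolding lie_bracket_def by simp

lemma conj_lie_bracket:
  assumes "P \<in> carrier_mat m m" "Q \<in> carrier_mat m m" "A \<in> carrier_mat m m" "B \<in> carrier_mat m m"
    and "Q * P = 1\<^sub>m m"
  shows "P * lie_bracket A B * Q = lie_bracket (P * A * Q) (P * B * Q)"
proof -
  interpret R: ring "mat_ring m" by (rule ring_mat)
  show ?thesis using R.commutator_conj[of P Q A B] assms unfolding lie_bracket_def
    by (simp add: ring_mat_simps a_minus_mat_ring)
qed

section \<open>Linear combinations and spans\<close>

lemma lin_comb_Nil1[simp]: "lin_comb m [] Ms = 0\<^sub>m m m" by (simp add: lin_comb_def)
lemma lin_comb_Nil2[simp]: "lin_comb m cs [] = 0\<^sub>m m m" by (simp add: lin_comb_def)
lemma lin_comb_Cons[simp]: "lin_comb m (c#cs) (M#Ms) = c \<cdot>\<^sub>m M + lin_comb m cs Ms"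
  by (simp add: lin_comb_def)

lemma lin_comb_carrier[simp]: "set Ms \<subseteq> carrier_mat m m \<Longrightarrow> lin_comb m cs Ms \<in> carrier_mat m m"
proof (induct Ms arbitrary: cs)
  case Nil thus ?case by simp
next
  case (Cons M Ms) thus ?case by (cases cs) auto
qed

lemma lin_comb_dim[simp]:
  "set Ms \<subseteq> carrier_mat m m \<Longrightarrow> dim_row (lin_comb m cs Ms) = m"
  "set Ms \<subseteq> carrier_mat m m \<Longrightarrow> dim_col (lin_comb m cs Ms) = m"
  using carrier_matD[OF lin_comb_carrier[of Ms m cs]] by auto

lemma index_lin_comb:
  assumes "set Ms \<subseteq> carrier_mat m m" "length cs = length Ms" "i < m" "j < m"
  shows "lin_comb m cs Ms $$ (i,j) = (\<Sum>l<length Ms. cs!l * Ms!l $$ (i,j))"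
  using assms
proof (induct Ms arbitrary: cs)
  case Nil thus ?case by simp
next
  case (Cons M Ms)
  then obtain c cs' where cs: "cs = c # cs'" by (cases cs) auto
  have "lin_comb m cs (M#Ms) $$ (i,j) = c * M $$ (i,j) + lin_comb m cs' Ms $$ (i,j)"
    using Cons.prems cs by (auto simp: carrier_matD)
  also have "\<dots> = c * M $$ (i,j) + (\<Sum>l<length Ms. cs'!l * Ms!l $$ (i,j))"
    using Cons cs by simp
  also have "\<dots> = (\<Sum>l<length (M#Ms). cs!l * (M#Ms)!l $$ (i,j))"
    unfolding cs length_Cons sum.lessThan_Suc_shift by simp
  finally show ?case .
qed

lemma sum_eq_single: "finite A \<Longrightarrow> a \<in> A \<Longrightarrow> (\<And>x. x \<in> A \<Longrightarrow> x \<noteq> a \<Longrightarrow> f x = 0) \<Longrightarrow> sum f A = f a"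
  by (subst sum.remove[of A a]) (auto intro!: sum.neutral)

definition private_entries :: "nat \<Rightarrow> complex mat list \<Rightarrow> bool" where
  "private_entries m Fs \<longleftrightarrow> (\<forall>l<length Fs. \<exists>i j. i < m \<and> j < m \<and> Fs!l $$ (i,j) \<noteq> 0 \<and>
     (\<forall>l'<length Fs. l' \<noteq> l \<longrightarrow> Fs!l' $$ (i,j) = 0))"

lemma lin_indep_mats_if_private_entries:
  assumes car: "set Ms \<subseteq> carrier_mat m m" and wit: "private_entries m Ms"
  shows "lin_indep_mats m Ms"
  unfolding lin_indep_mats_def
proof (intro allI impI ballI)
  fix cs c assume h: "length cs = length Ms \<and> lin_comb m cs Ms = 0\<^sub>m m m" and c: "c \<in> set cs"
  then obtain l where l: "l < length cs" "c = cs!l" by (auto simp: in_set_conv_nth)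
  obtain i j where ij: "i < m" "j < m" "Ms!l $$ (i,j) \<noteq> 0"
    "\<forall>l'<length Ms. l' \<noteq> l \<longrightarrow> Ms!l' $$ (i,j) = 0"
    using wit l h unfolding private_entries_def by auto
  have "(\<Sum>l'<length Ms. cs!l' * Ms!l' $$ (i,j)) = lin_comb m cs Ms $$ (i,j)"
    by (rule index_lin_comb[OF car, symmetric]) (use h ij in auto)
  hence "0 = (\<Sum>l'<length Ms. cs!l' * Ms!l' $$ (i,j))" using h ij by simp
  also have "\<dots> = cs!l * Ms!l $$ (i,j)" by (rule sum_eq_single) (use l h ij in auto)
  finally show "c = 0" using ij l by simp
qed

lemma lin_comb_append:
  assumes "length cs1 = length Ms1" "set Ms1 \<subseteq> carrier_mat m m" "set Ms2 \<subseteq> carrier_mat m m"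
  shows "lin_comb m (cs1 @ cs2) (Ms1 @ Ms2) = lin_comb m cs1 Ms1 + lin_comb m cs2 Ms2"
  using assms
proof (induct Ms1 arbitrary: cs1)
  case Nil thus ?case by simp
next
  case (Cons M Ms)
  then obtain c cs' where cs: "cs1 = c # cs'" by (cases cs1) auto
  show ?case using Cons cs by (simp add: assoc_add_mat[of _ m m])
qed

lemma smult_smult_mat: "(a::complex) \<cdot>\<^sub>m (c \<cdot>\<^sub>m M) = (a * c) \<cdot>\<^sub>m M"
  by (rule eq_matI) (auto simp: mult.assoc)

lemma lin_comb_smult:
  "set Ms \<subseteq> carrier_mat m m \<Longrightarrow> a \<cdot>\<^sub>m lin_comb m cs Ms = lin_comb m (map ((*) a) cs) Ms"
proof (induct Ms arbitrary: cs)
  case Nil thus ?case by simp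
next
  case (Cons M Ms) thus ?case 
    by (cases cs) (auto simp: add_smult_distrib_left_mat[of _ m m] smult_smult_mat)
qed

lemma lin_comb_map:
  assumes f_car: "\<And>A. A \<in> carrier_mat m m \<Longrightarrow> f A \<in> carrier_mat m' m'"
    and f_lin: "\<And>c A B. A \<in> carrier_mat m m \<Longrightarrow> B \<in> carrier_mat m m \<Longrightarrow> f (c \<cdot>\<^sub>m A + B) = c \<cdot>\<^sub>m f A + f B"
    and f0: "f (0\<^sub>m m m) = 0\<^sub>m m' m'"
  shows "set Ms \<subseteq> carrier_mat m m \<Longrightarrow> f (lin_comb m cs Ms) = lin_comb m' cs (map f Ms)"
proof (induct Ms arbitrary: cs)
  case Nil thus ?case using f0 by simp
next
  case (Cons M Ms) thus ?case using f0 f_lin by (cases cs) auto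
qed

definition mat_subspace :: "nat \<Rightarrow> complex mat set \<Rightarrow> bool" where
  "mat_subspace m T \<longleftrightarrow> T \<subseteq> carrier_mat m m \<and> 0\<^sub>m m m \<in> T \<and> (\<forall>A\<in>T. \<forall>B\<in>T. A + B \<in> T)
     \<and> (\<forall>c. \<forall>A\<in>T. c \<cdot>\<^sub>m A \<in> T)"

lemma lin_comb_in_mat_subspace: "mat_subspace m T \<Longrightarrow> set Ms \<subseteq> T \<Longrightarrow> lin_comb m cs Ms \<in> T"
proof (induct Ms arbitrary: cs)
  case Nil thus ?case by (simp add: mat_subspace_def)
next
  case (Cons M Ms) thus ?case by (cases cs) (auto simp: mat_subspace_def)
qed

lemma mat_subspace_span:
  assumes "S \<subseteq> carrier_mat m m" shows "mat_subspace m (mat_span m S)"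
  unfolding mat_subspace_def
proof (intro conjI ballI allI)
  show "mat_span m S \<subseteq> carrier_mat m m" using assms unfolding mat_span_def by auto
  show "0\<^sub>m m m \<in> mat_span m S" unfolding mat_span_def
    by (rule CollectI, rule exI[of _ "[]"], rule exI[of _ "[]"]) simp
next
  fix A B assume "A \<in> mat_span m S" "B \<in> mat_span m S"
  then obtain cs1 Ms1 cs2 Ms2 where A: "A = lin_comb m cs1 Ms1" "set Ms1 \<subseteq> S" "length cs1 = length Ms1"
    and B: "B = lin_comb m cs2 Ms2" "set Ms2 \<subseteq> S" "length cs2 = length Ms2"
    unfolding mat_span_def by blast
  have "A + B = lin_comb m (cs1 @ cs2) (Ms1 @ Ms2)" using A B assms
    by (subst lin_comb_append) auto
  thus "A + B \<in> mat_span m S" unfolding mat_span_def using A B by fastforce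
next
  fix c A assume "A \<in> mat_span m S"
  then obtain cs1 Ms1 where A: "A = lin_comb m cs1 Ms1" "set Ms1 \<subseteq> S" "length cs1 = length Ms1"
    unfolding mat_span_def by blast
  have "c \<cdot>\<^sub>m A = lin_comb m (map ((*) c) cs1) Ms1" using A assms by (simp add: lin_comb_smult)
  thus "c \<cdot>\<^sub>m A \<in> mat_span m S" unfolding mat_span_def using A by fastforce
qed

lemma mat_span_base:
  assumes "S \<subseteq> carrier_mat m m" "M \<in> S" shows "M \<in> mat_span m S"
proof -
  have "lin_comb m [1] [M] = M" using assms by (intro eq_matI) (auto simp: carrier_matD)
  thus ?thesis unfolding mat_span_def using assms(2) by (metis (mono_tags, lifting) CollectI empty_subsetI
       insert_subset length_Cons list.set(1,2) list.size(3))
qed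

lemma mat_span_least: "mat_subspace m T \<Longrightarrow> S \<subseteq> T \<Longrightarrow> mat_span m S \<subseteq> T"
  unfolding mat_span_def using lin_comb_in_mat_subspace by blast

section \<open>Derived series\<close>

lemma lie_subalgebra_mat_subspace: "lie_subalgebra m b \<Longrightarrow> mat_subspace m b"
  unfolding lie_subalgebra_def mat_subspace_def by auto

lemma derived_series_mat_subspace: "lie_subalgebra m b \<Longrightarrow> mat_subspace m (derived_series m b i)"
proof (induct i)
  case 0 thus ?case by (simp add: lie_subalgebra_mat_subspace)
next
  case (Suc i)
  hence "derived_series m b i \<subseteq> carrier_mat m m" by (simp add: mat_subspace_def)
  hence "{lie_bracket A B | A B. A \<in> derived_series m b i \<and> B \<in> derived_series m b i} \<subseteq> carrier_mat m m"
    using lie_bracket_carrier by blast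
  thus ?case by (simp add: mat_subspace_span)
qed

lemma derived_series_carrier: "lie_subalgebra m b \<Longrightarrow> derived_series m b i \<subseteq> carrier_mat m m"
  using derived_series_mat_subspace[of m b i] by (simp add: mat_subspace_def)

lemma zero_in_derived_series: "lie_subalgebra m b \<Longrightarrow> 0\<^sub>m m m \<in> derived_series m b i"
  using derived_series_mat_subspace[of m b i] by (simp add: mat_subspace_def)

lemma lie_bracket_in_derived_series:
  assumes "lie_subalgebra m b" "A \<in> derived_series m b i" "B \<in> derived_series m b i"
  shows "lie_bracket A B \<in> derived_series m b (Suc i)"
proof -
  have "{lie_bracket A B | A B. A \<in> derived_series m b i \<and> B \<in> derived_series m b i} \<subseteq> carrier_mat m m"
    using derived_series_carrier[OF assms(1), of i] lie_bracket_carrier by blast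
  thus ?thesis using assms by (auto intro!: mat_span_base)
qed

lemma derived_series_ad_closed:
  assumes L: "lie_subalgebra m b" and y: "y \<in> b"
  shows "z \<in> derived_series m b i \<Longrightarrow> lie_bracket y z \<in> derived_series m b i"
proof (induct i arbitrary: z)
  case 0 thus ?case using L y by (simp add: lie_subalgebra_def)
next
  case (Suc i)
  have yc: "y \<in> carrier_mat m m" using L y by (auto simp: lie_subalgebra_def)
  let ?D = "derived_series m b (Suc i)"
  let ?T = "{z \<in> carrier_mat m m. lie_bracket y z \<in> ?D}"
  have sD: "mat_subspace m ?D" using derived_series_mat_subspace[OF L] .
  have "mat_subspace m ?T" unfolding mat_subspace_def
  proof (intro conjI ballI allI)
    show "?T \<subseteq> carrier_mat m m" by auto
    show "0\<^sub>m m m \<in> ?T" using lie_bracket_zero_right[OF yc] sD by (simp add: mat_subspace_def)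
  next
    fix A B assume "A \<in> ?T" "B \<in> ?T"
    thus "A + B \<in> ?T" using lie_bracket_add_right[OF yc] sD by (auto simp: mat_subspace_def)
  next
    fix c A assume "A \<in> ?T"
    thus "c \<cdot>\<^sub>m A \<in> ?T" using lie_bracket_smult_right[OF yc] sD by (auto simp: mat_subspace_def)
  qed
  moreover have "{lie_bracket A B | A B. A \<in> derived_series m b i \<and> B \<in> derived_series m b i} \<subseteq> ?T"
  proof safe
    fix A B assume A: "A \<in> derived_series m b i" and B: "B \<in> derived_series m b i"
    have Ac: "A \<in> carrier_mat m m" and Bc: "B \<in> carrier_mat m m" using A B derived_series_carrier[OF L]
      by auto
    show "lie_bracket A B \<in> carrier_mat m m" using Ac Bc by simp
    have "lie_bracket y (lie_bracket A B) = lie_bracket (lie_bracket y A) B + lie_bracket A (lie_bracket y B)"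
      by (rule lie_bracket_jacobi[OF yc Ac Bc])
    moreover have "lie_bracket (lie_bracket y A) B \<in> ?D"
      by (rule lie_bracket_in_derived_series[OF L Suc(1)[OF A] B])
    moreover have "lie_bracket A (lie_bracket y B) \<in> ?D"
      by (rule lie_bracket_in_derived_series[OF L A Suc(1)[OF B]])
    ultimately show "lie_bracket y (lie_bracket A B) \<in> ?D" using sD by (simp add: mat_subspace_def)
  qed
  ultimately have "?D \<subseteq> ?T" by (simp add: mat_span_least)
  thus ?case using Suc(2) by auto
qed

lemma conj_cancel:
  assumes P: "(P :: complex mat) \<in> carrier_mat n n" and Q: "Q \<in> carrier_mat n n" and QP: "Q * P = 1\<^sub>m n"
    and X: "X \<in> carrier_mat n n" shows "Q * (P * X * Q) * P = X"
proof -
  have "Q * (P * X * Q) * P = (Q * P) * X * (Q * P)" using P Q X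
    by (simp add: assoc_mult_mat[of _ n n _ n _ n])
  thus ?thesis using QP left_mult_one_mat[OF X] right_mult_one_mat[OF X] by simp
qed

lemma list_in_image_obtain: "set Ms \<subseteq> f ` S \<Longrightarrow> \<exists>Ns. Ms = map f Ns \<and> set Ns \<subseteq> S"
proof (induct Ms)
  case Nil thus ?case by simp
next
  case (Cons M Ms)
  then obtain N Ns where "M = f N" "N \<in> S" "Ms = map f Ns" "set Ns \<subseteq> S" by auto
  thus ?case by (intro exI[of _ "N # Ns"]) auto
qed

context
  fixes m :: nat and P Q :: "complex mat"
  assumes P: "P \<in> carrier_mat m m" and Q: "Q \<in> carrier_mat m m" and QP: "Q * P = 1\<^sub>m m"
begin

lemma conj_carrier: "A \<in> carrier_mat m m \<Longrightarrow> P * A * Q \<in> carrier_mat m m"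
  using P Q by simp

lemma conj_linear:
  assumes A: "A \<in> carrier_mat m m" and B: "B \<in> carrier_mat m m"
  shows "P * (c \<cdot>\<^sub>m A + B) * Q = c \<cdot>\<^sub>m (P * A * Q) + P * B * Q"
proof -
  have "P * (c \<cdot>\<^sub>m A + B) = P * (c \<cdot>\<^sub>m A) + P * B"
    by (rule mult_add_distrib_mat[of P m m "c \<cdot>\<^sub>m A" m B]) (use P A B in auto)
  also have "P * (c \<cdot>\<^sub>m A) = c \<cdot>\<^sub>m (P * A)" by (rule mult_smult_distrib[of P m m A m]) (use P A in auto)
  finally have 1: "P * (c \<cdot>\<^sub>m A + B) = c \<cdot>\<^sub>m (P * A) + P * B" .
  have "(c \<cdot>\<^sub>m (P * A) + P * B) * Q = (c \<cdot>\<^sub>m (P * A)) * Q + (P * B) * Q"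
    by (rule add_mult_distrib_mat[of _ m m _ Q m]) (use P A B Q in auto)
  also have "(c \<cdot>\<^sub>m (P * A)) * Q = c \<cdot>\<^sub>m (P * A * Q)" 
    by (rule mult_smult_assoc_mat[of "P * A" m m Q m]) (use P A Q in auto)
  finally show ?thesis using 1 by simp
qed

lemma conj_zero: "P * 0\<^sub>m m m * Q = 0\<^sub>m m m"
  using P Q by simp

lemma conj_lin_comb:
  "set Ms \<subseteq> carrier_mat m m \<Longrightarrow> P * lin_comb m cs Ms * Q = lin_comb m cs (map (\<lambda>A. P * A * Q) Ms)"
  by (rule lin_comb_map[of m "\<lambda>A. P * A * Q" m]) (auto simp: conj_carrier conj_linear conj_zero)

lemma mat_span_conj_image:
  assumes S: "S \<subseteq> carrier_mat m m"
  shows "mat_span m ((\<lambda>A. P * A * Q) ` S) = (\<lambda>A. P * A * Q) ` mat_span m S"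
proof
  show "mat_span m ((\<lambda>A. P * A * Q) ` S) \<subseteq> (\<lambda>A. P * A * Q) ` mat_span m S"
  proof
    fix X assume "X \<in> mat_span m ((\<lambda>A. P * A * Q) ` S)"
    then obtain cs Ms where X: "X = lin_comb m cs Ms" "set Ms \<subseteq> (\<lambda>A. P * A * Q) ` S" "length cs = length Ms"
      unfolding mat_span_def by blast
    obtain Ns where Ns: "Ms = map (\<lambda>A. P * A * Q) Ns" "set Ns \<subseteq> S" using list_in_image_obtain[OF X(2)]
      by blast
    have "X = P * lin_comb m cs Ns * Q" using X Ns S by (simp add: conj_lin_comb)
    moreover have "lin_comb m cs Ns \<in> mat_span m S" unfolding mat_span_def using Ns X by auto
    ultimately show "X \<in> (\<lambda>A. P * A * Q) ` mat_span m S" by blast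
  qed
next
  show "(\<lambda>A. P * A * Q) ` mat_span m S \<subseteq> mat_span m ((\<lambda>A. P * A * Q) ` S)"
  proof
    fix X assume "X \<in> (\<lambda>A. P * A * Q) ` mat_span m S"
    then obtain cs Ns where X: "X = P * lin_comb m cs Ns * Q" "set Ns \<subseteq> S" "length cs = length Ns"
      unfolding mat_span_def by blast
    have "X = lin_comb m cs (map (\<lambda>A. P * A * Q) Ns)" using X S by (simp add: conj_lin_comb)
    hence "X = lin_comb m cs (map (\<lambda>A. P * A * Q) Ns) \<and> set (map (\<lambda>A. P * A * Q) Ns) \<subseteq> (\<lambda>A. P * A * Q) ` S
       \<and> length cs = length (map (\<lambda>A. P * A * Q) Ns)" using X by auto
    thus "X \<in> mat_span m ((\<lambda>A. P * A * Q) ` S)" unfolding mat_span_def by blast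
  qed
qed

lemma derived_series_conj:
  assumes L: "lie_subalgebra m b"
  shows "derived_series m ((\<lambda>A. P * A * Q) ` b) i = (\<lambda>A. P * A * Q) ` derived_series m b i"
proof (induct i)
  case 0 thus ?case by simp
next
  case (Suc i)
  let ?f = "\<lambda>A. P * A * Q"
  let ?D = "derived_series m b i"
  have Dc: "?D \<subseteq> carrier_mat m m" by (rule derived_series_carrier[OF L])
  have key: "lie_bracket (?f A) (?f B) = ?f (lie_bracket A B)" if "A \<in> ?D" "B \<in> ?D" for A B
  proof -
    have "A \<in> carrier_mat m m" "B \<in> carrier_mat m m" using Dc that by auto
    thus ?thesis using conj_lie_bracket[OF P Q _ _ QP] by simp
  qed
  have "{lie_bracket A B | A B. A \<in> ?f ` ?D \<and> B \<in> ?f ` ?D} = ?f ` {lie_bracket A B | A B. A \<in> ?D \<and> B \<in> ?D}"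
  proof (intro equalityI subsetI)
    fix X assume "X \<in> {lie_bracket A B | A B. A \<in> ?f ` ?D \<and> B \<in> ?f ` ?D}"
    then obtain A B where AB: "X = lie_bracket (?f A) (?f B)" "A \<in> ?D" "B \<in> ?D" by blast
    hence "X = ?f (lie_bracket A B)" using key by simp
    thus "X \<in> ?f ` {lie_bracket A B | A B. A \<in> ?D \<and> B \<in> ?D}" using AB by blast
  next
    fix X assume "X \<in> ?f ` {lie_bracket A B | A B. A \<in> ?D \<and> B \<in> ?D}"
    then obtain A B where AB: "X = ?f (lie_bracket A B)" "A \<in> ?D" "B \<in> ?D" by blast
    hence "X = lie_bracket (?f A) (?f B)" using key by simp
    thus "X \<in> {lie_bracket A B | A B. A \<in> ?f ` ?D \<and> B \<in> ?f ` ?D}" using AB by blast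
  qed
  moreover have "{lie_bracket A B | A B. A \<in> ?D \<and> B \<in> ?D} \<subseteq> carrier_mat m m"
    using Dc lie_bracket_carrier by blast
  ultimately show ?case using Suc by (simp add: mat_span_conj_image)
qed

lemma one_smult_mat: "(1::complex) \<cdot>\<^sub>m X = X"
  by (rule eq_matI) auto

lemma lie_subalgebra_conj:
  assumes L: "lie_subalgebra m b" shows "lie_subalgebra m ((\<lambda>A. P * A * Q) ` b)"
proof -
  have bc: "b \<subseteq> carrier_mat m m" using L by (simp add: lie_subalgebra_def)
  have b0: "0\<^sub>m m m \<in> b" using L by (simp add: lie_subalgebra_def)
  have badd: "A + B \<in> b" if "A \<in> b" "B \<in> b" for A B using L that by (simp add: lie_subalgebra_def)
  have bsm: "c \<cdot>\<^sub>m A \<in> b" if "A \<in> b" for A c using L that by (simp add: lie_subalgebra_def)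
  have bbr: "lie_bracket A B \<in> b" if "A \<in> b" "B \<in> b" for A B using L that by (simp add: lie_subalgebra_def)
  show ?thesis unfolding lie_subalgebra_def
  proof (intro conjI ballI allI)
    show "(\<lambda>A. P * A * Q) ` b \<subseteq> carrier_mat m m" using bc conj_carrier by blast
    have "P * 0\<^sub>m m m * Q \<in> (\<lambda>A. P * A * Q) ` b" using b0 by blast
    thus "0\<^sub>m m m \<in> (\<lambda>A. P * A * Q) ` b" using conj_zero by simp
  next
    fix A B assume "A \<in> (\<lambda>A. P * A * Q) ` b" "B \<in> (\<lambda>A. P * A * Q) ` b"
    then obtain A' B' where AB: "A = P * A' * Q" "B = P * B' * Q" "A' \<in> b" "B' \<in> b" by blast
    have c: "A' \<in> carrier_mat m m" "B' \<in> carrier_mat m m" using AB bc by auto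
    have "P * (1 \<cdot>\<^sub>m A' + B') * Q = 1 \<cdot>\<^sub>m (P * A' * Q) + P * B' * Q" by (rule conj_linear[OF c])
    hence "A + B = P * (1 \<cdot>\<^sub>m A' + B') * Q" using AB by (simp add: one_smult_mat)
    moreover have "1 \<cdot>\<^sub>m A' + B' \<in> b" using AB by (simp add: badd bsm)
    ultimately show "A + B \<in> (\<lambda>A. P * A * Q) ` b" by blast
    have "lie_bracket A B = P * lie_bracket A' B' * Q" using conj_lie_bracket[OF P Q c QP] AB by simp
    moreover have "lie_bracket A' B' \<in> b" using AB by (simp add: bbr)
    ultimately show "lie_bracket A B \<in> (\<lambda>A. P * A * Q) ` b" by blast
  next
    fix c A assume "A \<in> (\<lambda>A. P * A * Q) ` b"
    then obtain A' where AB: "A = P * A' * Q" "A' \<in> b" by blast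
    have ca: "A' \<in> carrier_mat m m" using AB bc by auto
    have "P * (c \<cdot>\<^sub>m A' + 0\<^sub>m m m) * Q = c \<cdot>\<^sub>m (P * A' * Q) + P * 0\<^sub>m m m * Q"
      by (rule conj_linear[OF ca zero_carrier_mat])
    also have "\<dots> = c \<cdot>\<^sub>m (P * A' * Q)" using conj_zero conj_carrier[OF ca] by simp
    finally have "c \<cdot>\<^sub>m A = P * (c \<cdot>\<^sub>m A' + 0\<^sub>m m m) * Q" using AB by simp
    moreover have "c \<cdot>\<^sub>m A' + 0\<^sub>m m m \<in> b" using AB by (simp add: badd bsm b0)
    ultimately show "c \<cdot>\<^sub>m A \<in> (\<lambda>A. P * A * Q) ` b" by blast
  qed
qed

lemma solvable_subalg_conj:
  assumes "solvable_subalg m b" shows "solvable_subalg m ((\<lambda>A. P * A * Q) ` b)"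
proof -
  from assms obtain k where L: "lie_subalgebra m b" and k: "derived_series m b k = {0\<^sub>m m m}"
    unfolding solvable_subalg_def by blast
  have "derived_series m ((\<lambda>A. P * A * Q) ` b) k = {0\<^sub>m m m}"
    using derived_series_conj[OF L, of k] k conj_zero by simp
  thus ?thesis unfolding solvable_subalg_def using lie_subalgebra_conj[OF L] by blast
qed

end

section \<open>Upper triangular matrices\<close>

definition upper_band :: "nat \<Rightarrow> nat \<Rightarrow> complex mat set" where
  "upper_band m d = {A \<in> carrier_mat m m. \<forall>i j. i < m \<longrightarrow> j < m \<longrightarrow> j < i + d \<longrightarrow> A $$ (i,j) = 0}"

lemma upper_band_mat_subspace: "mat_subspace m (upper_band m d)"
  unfolding mat_subspace_def upper_band_def by auto

lemma index_mult_mat_single: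
  assumes "X \<in> carrier_mat m m" "Y \<in> carrier_mat m m" "i < m" "j < m" "k0 < m"
  "\<And>k. k < m \<Longrightarrow> k \<noteq> k0 \<Longrightarrow> X $$ (i,k) * Y $$ (k,j) = 0"
  shows "(X * Y) $$ (i,j) = X $$ (i,k0) * Y $$ (k0,j)"
proof -
  have "(X * Y) $$ (i,j) = (\<Sum>k<m. X $$ (i,k) * Y $$ (k,j))" by (rule index_mult_mat_sum) (use assms in auto)
  also have "\<dots> = X $$ (i,k0) * Y $$ (k0,j)" by (rule sum_eq_single) (use assms in auto)
  finally show ?thesis .
qed

lemma index_mult_mat_zero:
  assumes "X \<in> carrier_mat m m" "Y \<in> carrier_mat m m" "i < m" "j < m"
  "\<And>k. k < m \<Longrightarrow> X $$ (i,k) * Y $$ (k,j) = 0"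
  shows "(X * Y) $$ (i,j) = 0"
proof -
  have "(X * Y) $$ (i,j) = (\<Sum>k<m. X $$ (i,k) * Y $$ (k,j))" by (rule index_mult_mat_sum) (use assms in auto)
  also have "\<dots> = 0" by (rule sum.neutral) (use assms in auto)
  finally show ?thesis .
qed

lemma index_mult_upper_band:
  assumes A: "A \<in> upper_band m d" and B: "B \<in> upper_band m e" and ij: "i < m" "j < m" "j \<le> i + d + e"
  shows "(A * B) $$ (i,j) = (if j = i + d + e then A $$ (i, i + d) * B $$ (i + d, j) else 0)"
proof -
  have Ac: "A \<in> carrier_mat m m" and Bc: "B \<in> carrier_mat m m" using A B by (auto simp: upper_band_def)
  have z: "A $$ (i,k) * B $$ (k,j) = 0" if "k < m" "k \<noteq> i + d" for k
  proof (cases "k < i + d")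
    case True thus ?thesis using A ij that by (auto simp: upper_band_def)
  next
    case False hence "j < k + e" using that ij by auto
    thus ?thesis using B ij that by (auto simp: upper_band_def)
  qed
  show ?thesis
  proof (cases "j = i + d + e")
    case True
    thus ?thesis using index_mult_mat_single[OF Ac Bc ij(1,2), of "i + d"] z ij by auto
  next
    case False
    have "A $$ (i,k) * B $$ (k,j) = 0" if "k < m" for k
    proof (cases "k = i + d")
      case True thus ?thesis using B ij that False by (auto simp: upper_band_def)
    qed (use z that in auto)
    thus ?thesis using index_mult_mat_zero[OF Ac Bc ij(1,2)] False by auto
  qed
qed

lemma mult_upper_band:
  assumes A: "A \<in> upper_band m d" and B: "B \<in> upper_band m e"
  shows "A * B \<in> upper_band m (d + e)"
proof -
  have Ac: "A \<in> carrier_mat m m" and Bc: "B \<in> carrier_mat m m" using A B by (auto simp: upper_band_def)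
  show ?thesis unfolding upper_band_def using index_mult_upper_band[OF A B] Ac Bc by auto
qed

lemma lie_bracket_upper_band:
  assumes A: "A \<in> upper_band m d" and B: "B \<in> upper_band m d"
  shows "lie_bracket A B \<in> upper_band m (Suc d)"
proof -
  have Ac: "A \<in> carrier_mat m m" and Bc: "B \<in> carrier_mat m m" using A B by (auto simp: upper_band_def)
  { fix i j assume ij: "i < m" "j < m" "j < i + Suc d"
    have "(A * B) $$ (i,j) = (B * A) $$ (i,j)"
      using index_mult_upper_band[OF A B ij(1,2)] index_mult_upper_band[OF B A ij(1,2)] ij by auto
    hence "lie_bracket A B $$ (i,j) = 0" using ij Ac Bc unfolding lie_bracket_def by simp }
  thus ?thesis unfolding upper_band_def lie_bracket_def using Ac Bc by auto
qed

lemma upper_borel_eq_upper_band: "upper_borel m = upper_band m 0"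
  unfolding upper_borel_def upper_band_def by auto

lemma derived_series_upper_borel: "derived_series m (upper_borel m) i \<subseteq> upper_band m i"
proof (induct i)
  case 0 thus ?case by (simp add: upper_borel_eq_upper_band)
next
  case (Suc i)
  have "{lie_bracket A B | A B. A \<in> derived_series m (upper_borel m) i \<and> B \<in> derived_series m (upper_borel m) i}
     \<subseteq> upper_band m (Suc i)" using Suc lie_bracket_upper_band by blast
  thus ?case by (simp add: mat_span_least upper_band_mat_subspace)
qed

lemma lie_subalgebra_upper_borel: "lie_subalgebra m (upper_borel m)"
  unfolding lie_subalgebra_def upper_borel_eq_upper_band
proof (intro conjI ballI allI)
  show "upper_band m 0 \<subseteq> carrier_mat m m" "0\<^sub>m m m \<in> upper_band m 0" by (auto simp: upper_band_def)
  fix A B assume "A \<in> upper_band m 0" "B \<in> upper_band m 0"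
  thus "A + B \<in> upper_band m 0" using upper_band_mat_subspace[of m 0] by (simp add: mat_subspace_def)
  have "A * B \<in> upper_band m 0" "B * A \<in> upper_band m 0"
    using mult_upper_band[OF \<open>A \<in> upper_band m 0\<close> \<open>B \<in> upper_band m 0\<close>]
      mult_upper_band[OF \<open>B \<in> upper_band m 0\<close> \<open>A \<in> upper_band m 0\<close>] by auto
  moreover have "A \<in> carrier_mat m m" "B \<in> carrier_mat m m" using \<open>A \<in> upper_band m 0\<close> \<open>B \<in> upper_band m 0\<close>
    by (auto simp: upper_band_def)
  ultimately show "lie_bracket A B \<in> upper_band m 0" unfolding lie_bracket_def 
    by (auto simp: upper_band_def carrier_matD)
next
  fix c A assume "A \<in> upper_band m 0" thus "c \<cdot>\<^sub>m A \<in> upper_band m 0" using upper_band_mat_subspace[of m 0]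
    by (simp add: mat_subspace_def)
qed

lemma solvable_upper_borel: "solvable_subalg m (upper_borel m)"
proof -
  have "derived_series m (upper_borel m) m \<subseteq> {0\<^sub>m m m}"
    using derived_series_upper_borel[of m m] by (auto simp: upper_band_def intro!: eq_matI)
  moreover have "0\<^sub>m m m \<in> derived_series m (upper_borel m) m"
    by (rule zero_in_derived_series[OF lie_subalgebra_upper_borel])
  ultimately show ?thesis unfolding solvable_subalg_def using lie_subalgebra_upper_borel by blast
qed

section \<open>Solvable subalgebras containing the principal nilpotent\<close>

abbreviation principal_nil :: "nat \<Rightarrow> complex mat" where "principal_nil m \<equiv> jordan_block m 0"

lemma index_principal_nil_mult:
  assumes A: "A \<in> carrier_mat m m" and ij: "i < m" "j < m"
  shows "(principal_nil m * A) $$ (i,j) = (if Suc i < m then A $$ (Suc i, j) else 0)"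
proof (cases "Suc i < m")
  case True
  have "(principal_nil m * A) $$ (i,j) = principal_nil m $$ (i, Suc i) * A $$ (Suc i, j)"
    by (rule index_mult_mat_single) (use assms True in auto)
  thus ?thesis using True assms by simp
next
  case False
  have "(principal_nil m * A) $$ (i,j) = 0" by (rule index_mult_mat_zero) (use assms False in auto)
  thus ?thesis using False by simp
qed

lemma index_mult_principal_nil:
  assumes A: "A \<in> carrier_mat m m" and ij: "i < m" "j < m"
  shows "(A * principal_nil m) $$ (i,j) = (if 0 < j then A $$ (i, j - 1) else 0)"
proof (cases "0 < j")
  case True
  have "(A * principal_nil m) $$ (i,j) = A $$ (i, j - 1) * principal_nil m $$ (j - 1, j)"
    by (rule index_mult_mat_single) (use assms True in \<open>auto split: if_splits\<close>)
  thus ?thesis using True assms by simp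
next
  case False
  have "(A * principal_nil m) $$ (i,j) = 0"
    by (rule index_mult_mat_zero) (use assms False in \<open>auto split: if_splits\<close>)
  thus ?thesis using False by simp
qed

lemma index_lie_bracket_principal_nil:
  assumes A: "A \<in> carrier_mat m m" and ij: "i < m" "j < m"
  shows "lie_bracket (principal_nil m) A $$ (i,j) = (if Suc i < m then A $$ (Suc i, j) else 0) - (if 0 < j then A $$ (i, j - 1) else 0)"
proof -
  have "lie_bracket (principal_nil m) A $$ (i,j) = (principal_nil m * A) $$ (i,j) - (A * principal_nil m) $$ (i,j)"
    unfolding lie_bracket_def using A ij by (simp add: carrier_matD)
  thus ?thesis using index_principal_nil_mult[OF assms] index_mult_principal_nil[OF assms] by simp
qed

definition lower_band :: "nat \<Rightarrow> nat \<Rightarrow> complex mat set" where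
  "lower_band m e = {A \<in> carrier_mat m m. \<forall>i j. i < m \<longrightarrow> j < m \<longrightarrow> j + e < i \<longrightarrow> A $$ (i,j) = 0}"

lemma upper_borel_eq_lower_band:
  "upper_borel m = lower_band m 0" unfolding upper_borel_def lower_band_def by auto
lemma lower_band_full: "A \<in> carrier_mat m m \<Longrightarrow> A \<in> lower_band m m" unfolding lower_band_def by auto
lemma lower_band_mono:
  "e \<le> e' \<Longrightarrow> A \<in> lower_band m e \<Longrightarrow> A \<in> lower_band m e'" unfolding lower_band_def by auto
lemma lower_band_carrier:
  "A \<in> lower_band m e \<Longrightarrow> A \<in> carrier_mat m m" unfolding lower_band_def by auto

lemma lie_bracket_principal_nil_lower_band:
  assumes A: "A \<in> lower_band m (Suc e)" shows "lie_bracket (principal_nil m) A \<in> lower_band m e"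
proof -
  have Ac: "A \<in> carrier_mat m m" using A by (rule lower_band_carrier)
  { fix i j assume ij: "i < m" "j < m" "j + e < i"
    have "(if Suc i < m then A $$ (Suc i, j) else 0) = 0" using A ij by (auto simp: lower_band_def)
    moreover have "(if 0 < j then A $$ (i, j - 1) else 0) = 0" using A ij by (auto simp: lower_band_def)
    ultimately have "lie_bracket (principal_nil m) A $$ (i,j) = 0"
      using index_lie_bracket_principal_nil[OF Ac ij(1,2)] by simp }
  thus ?thesis using Ac unfolding lower_band_def by auto
qed

text \<open>If \<open>[J, A]\<close> is upper triangular, the lowest diagonal of \<open>A\<close> is constant and starts with \<open>0\<close>.\<close>
lemma lower_band_shrink:
  assumes A: "A \<in> lower_band m (Suc (Suc e))" and C: "lie_bracket (principal_nil m) A \<in> lower_band m 0"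
  shows "A \<in> lower_band m (Suc e)"
proof -
  have Ac: "A \<in> carrier_mat m m" using A by (rule lower_band_carrier)
  have claim: "j + e + 2 < m \<longrightarrow> A $$ (j + e + 2, j) = 0" for j
  proof (induct j)
    case 0
    show ?case
    proof
      assume m: "0 + e + 2 < m"
      have "lie_bracket (principal_nil m) A $$ (e + 1, 0) = 0" using C m by (auto simp: lower_band_def)
      thus "A $$ (0 + e + 2, 0) = 0" using index_lie_bracket_principal_nil[OF Ac, of "e + 1" 0] m by simp
    qed
  next
    case (Suc j)
    show ?case
    proof
      assume m: "Suc j + e + 2 < m"
      have "lie_bracket (principal_nil m) A $$ (j + e + 2, Suc j) = 0" using C m
        by (auto simp: lower_band_def)
      hence "A $$ (Suc (j + e + 2), Suc j) = A $$ (j + e + 2, j)"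
        using index_lie_bracket_principal_nil[OF Ac, of "j + e + 2" "Suc j"] m by simp
      thus "A $$ (Suc j + e + 2, Suc j) = 0" using Suc m by simp
    qed
  qed
  { fix i j assume ij: "i < m" "j < m" "j + Suc e < i"
    have "A $$ (i,j) = 0"
    proof (cases "i = j + e + 2")
      case True thus ?thesis using claim[of j] ij by simp
    next
      case False hence "j + Suc (Suc e) < i" using ij by simp
      thus ?thesis using A ij by (auto simp: lower_band_def)
    qed }
  thus ?thesis using Ac unfolding lower_band_def by auto
qed

lemma lower_band_1_if_bracket_upper:
  "A \<in> lower_band m e \<Longrightarrow> lie_bracket (principal_nil m) A \<in> lower_band m 0 \<Longrightarrow> A \<in> lower_band m 1"
proof (induct e)
  case 0 thus ?case using lower_band_mono[of 0 1 A m] by simp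
next
  case (Suc e)
  show ?case
  proof (cases e)
    case 0 thus ?thesis using Suc by simp
  next
    case (Suc e')
    hence "A \<in> lower_band m e" using lower_band_shrink[of A m e'] Suc.prems by simp
    thus ?thesis using Suc.hyps Suc.prems by simp
  qed
qed

lemma of_nat_add_2_nonzero: "(of_nat x + 2 :: complex) \<noteq> 0"
proof -
  have "(of_nat x + 2 :: complex) = of_nat (x + 2)" by simp
  thus ?thesis by (metis add_is_0 of_nat_eq_0_iff zero_neq_numeral)
qed

lemma cartan_recurrence_progression:
  fixes B :: "nat \<Rightarrow> complex"
  assumes rec: "\<And>t. 1 \<le> t \<Longrightarrow> t < m \<Longrightarrow> B t * (2 * B t - B (t - 1) - B (Suc t)) = 0"
    and p1: "1 \<le> p" and prev: "B (p - 1) = 0" and nz: "B p \<noteq> 0"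
  shows "p + s + 1 \<le> m \<Longrightarrow> B (p + s) = (of_nat s + 1) * B p \<and> B (p + s + 1) = (of_nat s + 2) * B p"
proof (induct s)
  have step: "B (Suc t) = 2 * B t - B (t - 1)" if "1 \<le> t" "t < m" "B t \<noteq> 0" for t
  proof -
    have "2 * B t - B (t - 1) - B (Suc t) = 0" using rec[OF that(1,2)] that(3) by simp
    then show ?thesis by (simp add: algebra_simps)
  qed
  {
    case 0
    then show ?case using step[OF p1 _ nz] prev by simp
  next
    case (Suc s)
    then have IH: "B (p + s) = (of_nat s + 1) * B p" "B (p + s + 1) = (of_nat s + 2) * B p" by auto
    have "B (p + s + 1) \<noteq> 0" using IH(2) nz of_nat_add_2_nonzero[of s] by simp
    then have "B (Suc (p + s + 1)) = 2 * B (p + s + 1) - B (p + s)"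
      using step[of "p + s + 1"] Suc.prems by simp
    also have "\<dots> = (of_nat (Suc s) + 2) * B p" using IH by (simp add: algebra_simps)
    finally show ?case using IH(2) by (simp add: algebra_simps)
  }
qed

text \<open>The first nonzero \<open>B p\<close> would start the arithmetic progression \<open>B (p + s) = (s + 1) B p\<close>,
  which cannot return to \<open>0\<close> at \<open>m\<close>.\<close>
lemma cartan_recurrence_zero:
  fixes B :: "nat \<Rightarrow> complex"
  assumes B0: "B 0 = 0" and Bm: "B m = 0"
    and rec: "\<And>t. 1 \<le> t \<Longrightarrow> t < m \<Longrightarrow> B t * (2 * B t - B (t - 1) - B (Suc t)) = 0"
  shows "t \<le> m \<Longrightarrow> B t = 0"
proof (rule ccontr)
  assume t: "t \<le> m" "B t \<noteq> 0"
  define p where "p = (LEAST t. t \<le> m \<and> B t \<noteq> 0)"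
  have p: "p \<le> m \<and> B p \<noteq> 0" unfolding p_def by (rule LeastI[of _ t]) (use t in auto)
  have prev: "B (p - 1) = 0"
    using not_less_Least[of "p - 1" "\<lambda>t. t \<le> m \<and> B t \<noteq> 0"] p B0 unfolding p_def[symmetric]
    by (cases p) auto
  have p1: "1 \<le> p" using B0 p by (cases p) auto
  have pm: "p < m" using Bm p by (cases "p = m") auto
  have "B (p + (m - p - 1) + 1) = (of_nat (m - p - 1) + 2) * B p"
    using cartan_recurrence_progression[where m=m and s="m - p - 1", OF rec p1 prev] p pm by auto
  moreover have "p + (m - p - 1) + 1 = m" using pm by simp
  ultimately have "B m = (of_nat (m - p - 1) + 2) * B p" by simp
  thus False using Bm p of_nat_add_2_nonzero[of "m - p - 1"] by simp
qed

lemma index_lie_bracket_subdiagonal: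
  assumes A: "A \<in> lower_band m 1" and CL: "C \<in> lower_band m 0" and t: "1 \<le> t" "t < m"
  shows "lie_bracket A C $$ (t, t - 1) = A $$ (t, t - 1) * (C $$ (t - 1, t - 1) - C $$ (t,t))"
proof -
  have Ac: "A \<in> carrier_mat m m" and Cc: "C \<in> carrier_mat m m" using A CL by (auto intro: lower_band_carrier)
  have 1: "(A * C) $$ (t, t - 1) = A $$ (t, t - 1) * C $$ (t - 1, t - 1)"
  proof (rule index_mult_mat_single[OF Ac Cc])
    fix k assume k: "k < m" "k \<noteq> t - 1"
    show "A $$ (t, k) * C $$ (k, t - 1) = 0"
    proof (cases "k < t - 1")
      case True thus ?thesis using A k t by (auto simp: lower_band_def)
    next
      case False thus ?thesis using CL k t by (auto simp: lower_band_def)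
    qed
  qed (use t in auto)
  have 2: "(C * A) $$ (t, t - 1) = C $$ (t, t) * A $$ (t, t - 1)"
  proof (rule index_mult_mat_single[OF Cc Ac])
    fix k assume k: "k < m" "k \<noteq> t"
    show "C $$ (t, k) * A $$ (k, t - 1) = 0"
    proof (cases "k < t")
      case True thus ?thesis using CL k t by (auto simp: lower_band_def)
    next
      case False thus ?thesis using A k t by (auto simp: lower_band_def)
    qed
  qed (use t in auto)
  have "lie_bracket A C $$ (t, t - 1) = (A * C) $$ (t, t - 1) - (C * A) $$ (t, t - 1)"
    unfolding lie_bracket_def using Ac Cc t by (simp add: carrier_matD)
  thus ?thesis using 1 2 by (simp add: algebra_simps)
qed

text \<open>For the subdiagonal \<open>B t = A $$ (t, t - 1)\<close>, the diagonal of \<open>[J, A]\<close> is \<open>B (t + 1) - B t\<close>, and the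
  subdiagonal of \<open>[A, [J, A]]\<close> is \<open>B t (2 B t - B (t - 1) - B (t + 1))\<close>.\<close>
lemma lower_band_0_if_double_bracket:
  assumes A: "A \<in> lower_band m 1" and h: "lie_bracket A (lie_bracket (principal_nil m) A) \<in> lower_band m 0"
  shows "A \<in> lower_band m 0"
proof -
  have Ac: "A \<in> carrier_mat m m" using A by (rule lower_band_carrier)
  define C where "C = lie_bracket (principal_nil m) A"
  have CL: "C \<in> lower_band m 0" unfolding C_def by (rule lie_bracket_principal_nil_lower_band) (use A in simp)
  have Cc: "C \<in> carrier_mat m m" using CL by (rule lower_band_carrier)
  define B where "B t = (if 1 \<le> t \<and> t < m then A $$ (t, t - 1) else 0)" for t
  have B0: "B 0 = 0" and Bm: "B m = 0" by (auto simp: B_def)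
  have Cdiag: "C $$ (t,t) = B (Suc t) - B t" if "t < m" for t
    unfolding C_def using index_lie_bracket_principal_nil[OF Ac that that] that by (auto simp: B_def)
  have ACent: "lie_bracket A C $$ (t, t - 1) = B t * (C $$ (t - 1, t - 1) - C $$ (t,t))"
    if t: "1 \<le> t" "t < m" for t
    using index_lie_bracket_subdiagonal[OF A CL t] t by (simp add: B_def)
  have rec: "B t * (2 * B t - B (t - 1) - B (Suc t)) = 0" if t: "1 \<le> t" "t < m" for t
  proof -
    have z: "lie_bracket A C $$ (t, t - 1) = 0" using h t unfolding C_def[symmetric]
      by (auto simp: lower_band_def)
    have c1: "C $$ (t - 1, t - 1) = B t - B (t - 1)" using Cdiag[of "t - 1"] t by simp
    have c2: "C $$ (t, t) = B (Suc t) - B t" using Cdiag[of t] t by simp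
    have "C $$ (t - 1, t - 1) - C $$ (t, t) = (B t - B (t - 1)) - (B (Suc t) - B t)" by (simp only: c1 c2)
    also have "\<dots> = 2 * B t - B (t - 1) - B (Suc t)" by (simp add: algebra_simps)
    finally have d: "C $$ (t - 1, t - 1) - C $$ (t, t) = 2 * B t - B (t - 1) - B (Suc t)" .
    show ?thesis using ACent[OF t] z unfolding d by simp
  qed
  have Bz: "B t = 0" if "t \<le> m" for t using cartan_recurrence_zero[of B m, OF B0 Bm rec that] by simp
  { fix i j assume ij: "i < m" "j < m" "j < i"
    have "A $$ (i,j) = 0"
    proof (cases "i = Suc j")
      case True thus ?thesis using Bz[of i] ij by (simp add: B_def)
    next
      case False thus ?thesis using A ij by (auto simp: lower_band_def)
    qed }
  thus ?thesis using Ac unfolding lower_band_def by auto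
qed

lemma exists_switch_point: "\<not> P 0 \<Longrightarrow> P n \<Longrightarrow> \<exists>j<n. \<not> P j \<and> P (Suc j)"
proof (induct n)
  case 0 thus ?case by simp
next
  case (Suc n)
  show ?case
  proof (cases "P n")
    case True
    then obtain j where "j < n" "\<not> P j" "P (Suc j)" using Suc by auto
    thus ?thesis by (intro exI[of _ j]) auto
  next
    case False thus ?thesis using Suc by (intro exI[of _ n]) auto
  qed
qed

text \<open>Iterating \<open>ad J\<close> on \<open>z\<close> lowers its band until it becomes upper triangular; the last iterate
  \<open>w\<close> that is not lies in \<open>lower_band m 1\<close> with \<open>[w, [J, w]]\<close> upper triangular, which is impossible.\<close>
lemma ad_stable_subset_upper_borel:
  assumes Ac: "A \<subseteq> carrier_mat m m"
    and stab: "\<And>w. w \<in> A \<Longrightarrow> lie_bracket (principal_nil m) w \<in> A"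
    and br: "\<And>w w'. w \<in> A \<Longrightarrow> w' \<in> A \<Longrightarrow> lie_bracket w w' \<in> lower_band m 0"
  shows "A \<subseteq> lower_band m 0"
proof
  fix z assume z: "z \<in> A"
  define W where "W j = ((\<lambda>w. lie_bracket (principal_nil m) w) ^^ j) z" for j
  have WS: "W (Suc j) = lie_bracket (principal_nil m) (W j)" for j by (simp add: W_def)
  have WA: "W j \<in> A" for j by (induct j) (simp_all add: W_def z stab)
  have WL: "j \<le> m \<Longrightarrow> W j \<in> lower_band m (m - j)" for j
  proof (induct j)
    case 0 thus ?case using lower_band_full Ac z by (auto simp: W_def)
  next
    case (Suc j)
    hence "W j \<in> lower_band m (Suc (m - Suc j))" by (simp add: Suc_diff_Suc)
    thus ?case unfolding WS by (rule lie_bracket_principal_nil_lower_band)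
  qed
  have Wm: "W m \<in> lower_band m 0" using WL[of m] by simp
  show "z \<in> lower_band m 0"
  proof (rule ccontr)
    assume "z \<notin> lower_band m 0"
    hence "\<not> (W 0 \<in> lower_band m 0)" by (simp add: W_def)
    then obtain j where j: "j < m" "W j \<notin> lower_band m 0" "W (Suc j) \<in> lower_band m 0"
      using exists_switch_point[of "\<lambda>j. W j \<in> lower_band m 0" m] Wm by blast
    have "W j \<in> lower_band m m" using lower_band_full Ac WA by auto
    hence "W j \<in> lower_band m 1" using lower_band_1_if_bracket_upper j(3) WS by simp
    moreover have "lie_bracket (W j) (lie_bracket (principal_nil m) (W j)) \<in> lower_band m 0"
      using br[OF WA stab[OF WA]] .
    ultimately have "W j \<in> lower_band m 0" by (rule lower_band_0_if_double_bracket)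
    with j show False by simp
  qed
qed

lemma solvable_subalg_principal_nil_subset_upper:
  assumes S: "solvable_subalg m S" and J: "principal_nil m \<in> S" shows "S \<subseteq> upper_borel m"
proof -
  obtain k where L: "lie_subalgebra m S" and k: "derived_series m S k = {0\<^sub>m m m}"
    using S unfolding solvable_subalg_def by blast
  have "t \<le> k \<longrightarrow> derived_series m S (k - t) \<subseteq> lower_band m 0" for t
  proof (induct t)
    case 0 show ?case using k by (auto simp: lower_band_def)
  next
    case (Suc t)
    show ?case
    proof
      assume t: "Suc t \<le> k"
      let ?i = "k - Suc t"
      have si: "Suc ?i = k - t" using t by simp
      have IH: "derived_series m S (Suc ?i) \<subseteq> lower_band m 0" using Suc t si by simp
      show "derived_series m S (k - Suc t) \<subseteq> lower_band m 0"
      proof (rule ad_stable_subset_upper_borel)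
        show "derived_series m S ?i \<subseteq> carrier_mat m m" by (rule derived_series_carrier[OF L])
        show "lie_bracket (principal_nil m) w \<in> derived_series m S ?i" if "w \<in> derived_series m S ?i" for w
          by (rule derived_series_ad_closed[OF L J that])
        show "lie_bracket w w' \<in> lower_band m 0" if "w \<in> derived_series m S ?i" "w' \<in> derived_series m S ?i" for w w'
          using lie_bracket_in_derived_series[OF L that] IH by auto
      qed
    qed
  qed
  from this[of k] show ?thesis by (simp add: upper_borel_eq_lower_band)
qed

lemma borel_subalg_eq_conj_upper:
  assumes B: "borel_subalg m b" and xb: "x \<in> b"
    and g: "g \<in> carrier_mat m m" and g': "g' \<in> carrier_mat m m" and gg': "g * g' = 1\<^sub>m m"
    and g'g: "g' * g = 1\<^sub>m m"
    and J: "g' * x * g = principal_nil m"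
  shows "b = (\<lambda>A. g * A * g') ` upper_borel m"
proof -
  have S: "solvable_subalg m b" and max: "\<And>c. solvable_subalg m c \<Longrightarrow> b \<subseteq> c \<Longrightarrow> c = b"
    using B unfolding borel_subalg_def by auto
  have bc: "b \<subseteq> carrier_mat m m" using S unfolding solvable_subalg_def lie_subalgebra_def by auto
  have S': "solvable_subalg m ((\<lambda>A. g' * A * g) ` b)" by (rule solvable_subalg_conj[OF g' g gg' S])
  have "principal_nil m \<in> (\<lambda>A. g' * A * g) ` b" by (rule image_eqI[of _ _ x]) (use J xb in auto)
  hence sub: "(\<lambda>A. g' * A * g) ` b \<subseteq> upper_borel m"
    by (rule solvable_subalg_principal_nil_subset_upper[OF S'])
  have "b \<subseteq> (\<lambda>A. g * A * g') ` upper_borel m"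
  proof
    fix z assume z: "z \<in> b"
    have zc: "z \<in> carrier_mat m m" using z bc by auto
    have "z = g * (g' * z * g) * g'" using conj_cancel[OF g' g gg' zc] by simp
    moreover have "g' * z * g \<in> upper_borel m" using sub z by blast
    ultimately show "z \<in> (\<lambda>A. g * A * g') ` upper_borel m" by blast
  qed
  moreover have "solvable_subalg m ((\<lambda>A. g * A * g') ` upper_borel m)"
    by (rule solvable_subalg_conj[OF g g' g'g solvable_upper_borel])
  ultimately show ?thesis using max by blast
qed

section \<open>Centralizers of nilpotent matrices\<close>

lemma pow_mat_Suc_left: "A \<in> carrier_mat n n \<Longrightarrow> A ^\<^sub>m Suc k = A * A ^\<^sub>m k"
proof (induct k)
  case 0 thus ?case by (simp add: carrier_matD)
next
  case (Suc k)
  have "A ^\<^sub>m Suc (Suc k) = (A * A ^\<^sub>m k) * A" using Suc by simp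
  also have "\<dots> = A * (A ^\<^sub>m k * A)" using Suc by (simp add: assoc_mult_mat[of _ n n _ n _ n])
  finally show ?case by simp
qed

lemma pow_mat_add: "A \<in> carrier_mat n n \<Longrightarrow> A ^\<^sub>m (a + b) = A ^\<^sub>m a * A ^\<^sub>m b"
proof (induct b)
  case 0 thus ?case by (simp add: carrier_matD)
next
  case (Suc b)
  have "A ^\<^sub>m (a + Suc b) = (A ^\<^sub>m a * A ^\<^sub>m b) * A" using Suc by simp
  also have "\<dots> = A ^\<^sub>m a * (A ^\<^sub>m b * A)" using Suc by (simp add: assoc_mult_mat[of _ n n _ n _ n])
  finally show ?case by simp
qed

lemma pow_mat_comm: "A \<in> carrier_mat n n \<Longrightarrow> A ^\<^sub>m k * A = A * A ^\<^sub>m k"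
  using pow_mat_Suc_left[of A n k] by simp

lemma pow_mat_zero_mono: "A \<in> carrier_mat n n \<Longrightarrow> A ^\<^sub>m k = 0\<^sub>m n n \<Longrightarrow> k \<le> k' \<Longrightarrow> A ^\<^sub>m k' = 0\<^sub>m n n"
proof -
  assume A: "A \<in> carrier_mat n n" and z: "A ^\<^sub>m k = 0\<^sub>m n n" and kk: "k \<le> k'"
  have "A ^\<^sub>m k' = A ^\<^sub>m k * A ^\<^sub>m (k' - k)" using pow_mat_add[OF A, of k "k' - k"] kk by simp
  thus ?thesis using z A by simp
qed

lemma transpose_pow_mat:
  "(A :: complex mat) \<in> carrier_mat n n \<Longrightarrow> transpose_mat (A ^\<^sub>m k) = (transpose_mat A) ^\<^sub>m k"
proof (induct k)
  case 0 thus ?case by (simp add: carrier_matD)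
next
  case (Suc k)
  have "transpose_mat (A ^\<^sub>m Suc k) = transpose_mat (A * A ^\<^sub>m k)" using pow_mat_Suc_left[OF Suc(2)] by simp
  also have "\<dots> = transpose_mat (A ^\<^sub>m k) * transpose_mat A" by (rule transpose_mult) (use Suc(2) in auto)
  finally show ?case using Suc by simp
qed

definition mat_to_vec :: "nat \<Rightarrow> complex mat \<Rightarrow> complex vec" where
  "mat_to_vec m M = vec (m * m) (\<lambda>k. M $$ (k div m, k mod m))"

lemma flat_index_less: "i < m \<Longrightarrow> j < (m::nat) \<Longrightarrow> i * m + j < m * m"
proof -
  assume ij: "i < m" "j < m"
  have "i * m + j < Suc i * m" using ij by simp
  also have "\<dots> \<le> m * m" using mult_le_mono1[of "Suc i" m m] ij by simp
  finally show ?thesis .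
qed

lemma index_mat_to_vec: "i < m \<Longrightarrow> j < m \<Longrightarrow> mat_to_vec m M $ (i * m + j) = M $$ (i,j)"
proof -
  assume ij: "i < m" "j < m"
  have "i * m + j < m * m" using flat_index_less[OF ij] .
  moreover have "(i * m + j) div m = i" "(i * m + j) mod m = j" using ij by auto
  ultimately show ?thesis unfolding mat_to_vec_def by simp
qed

lemma mat_to_vec_inj:
  "A \<in> carrier_mat m m \<Longrightarrow> B \<in> carrier_mat m m \<Longrightarrow> mat_to_vec m A = mat_to_vec m B \<Longrightarrow> A = B"
  by (rule eq_matI) (auto simp: carrier_matD, metis index_mat_to_vec)

lemma sum_eq_two: "finite A \<Longrightarrow> i \<in> A \<Longrightarrow> j \<in> A \<Longrightarrow> i \<noteq> j \<Longrightarrow> (\<And>x. x \<in> A \<Longrightarrow> x \<noteq> i \<Longrightarrow> x \<noteq> j \<Longrightarrow> f x = 0)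
  \<Longrightarrow> sum f A = f i + f j"
  by (subst sum.remove[of A i], simp_all, subst sum.remove[of _ j]) (auto intro!: sum.neutral)

lemma lin_indep_mats_distinct:
  assumes car: "set Ms \<subseteq> carrier_mat m m" and ind: "lin_indep_mats m Ms"
  shows "distinct Ms"
proof (rule ccontr)
  assume "\<not> distinct Ms"
  then obtain i j where ij: "i < length Ms" "j < length Ms" "i \<noteq> j" "Ms ! i = Ms ! j"
    by (auto simp: distinct_conv_nth)
  define cs where "cs = map (\<lambda>l. if l = i then 1 else if l = j then -1 else (0::complex)) [0..<length Ms]"
  have len: "length cs = length Ms" by (simp add: cs_def)
  have "lin_comb m cs Ms = 0\<^sub>m m m"
  proof (rule eq_matI)
    fix a b assume ab: "a < dim_row (0\<^sub>m m m)" "b < dim_col (0\<^sub>m m m)"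
    have "lin_comb m cs Ms $$ (a,b) = (\<Sum>l<length Ms. cs!l * Ms!l $$ (a,b))"
      using index_lin_comb[OF car len] ab by simp
    also have "\<dots> = cs!i * Ms!i $$ (a,b) + cs!j * Ms!j $$ (a,b)"
      by (rule sum_eq_two) (use ij in \<open>auto simp: cs_def\<close>)
    also have "\<dots> = 0" using ij by (simp add: cs_def)
    finally show "lin_comb m cs Ms $$ (a,b) = 0\<^sub>m m m $$ (a,b)" using ab by simp
  qed (use car in auto)
  moreover have "(1::complex) \<in> set cs" using ij unfolding cs_def by (force simp: image_iff)
  ultimately show False using ind len unfolding lin_indep_mats_def by fastforce
qed

lemma lin_indep_mats_length_le:
  assumes car: "set Ms \<subseteq> carrier_mat m m" and ind: "lin_indep_mats m Ms"
  shows "length Ms \<le> m * m"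
proof -
  interpret V: vec_space "TYPE(complex)" "m * m" .
  have dist: "distinct Ms" by (rule lin_indep_mats_distinct[OF car ind])
  have inj: "inj_on (mat_to_vec m) (set Ms)"
  proof (rule inj_onI)
    fix x y assume "x \<in> set Ms" "y \<in> set Ms" "mat_to_vec m x = mat_to_vec m y"
    thus "x = y" using car mat_to_vec_inj[of x m y] by auto
  qed
  let ?A = "set (map (mat_to_vec m) Ms)"
  have distA: "distinct (map (mat_to_vec m) Ms)" using dist inj by (simp add: distinct_map)
  have Ac: "?A \<subseteq> carrier_vec (m * m)" by (auto simp: mat_to_vec_def)
  have li: "V.lin_indpt ?A"
  proof (rule V.finite_lin_indpt2)
    show "finite ?A" by simp
    show "?A \<subseteq> carrier_vec (m * m)" by (rule Ac)
    fix a assume lc: "V.lincomb a ?A = 0\<^sub>v (m * m)"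
    define cs where "cs = map (\<lambda>M. a (mat_to_vec m M)) Ms"
    have len: "length cs = length Ms" by (simp add: cs_def)
    have "lin_comb m cs Ms = 0\<^sub>m m m"
    proof (rule eq_matI)
      fix i j assume ij: "i < dim_row (0\<^sub>m m m)" "j < dim_col (0\<^sub>m m m)"
      have k: "i * m + j < m * m" using flat_index_less ij by simp
      have "0 = V.lincomb a ?A $ (i * m + j)" using lc k by simp
      also have "\<dots> = (\<Sum>x\<in>?A. a x * x $ (i * m + j))" by (rule V.lincomb_index[OF k Ac])
      also have "\<dots> = sum_list (map (\<lambda>x. a x * x $ (i * m + j)) (map (mat_to_vec m) Ms))"
        by (rule sum.distinct_set_conv_list[OF distA])
      also have "\<dots> = (\<Sum>l<length Ms. cs ! l * Ms ! l $$ (i,j))"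
        using ij by (simp add: sum_list_sum_nth cs_def index_mat_to_vec lessThan_atLeast0 o_def)
      also have "\<dots> = lin_comb m cs Ms $$ (i,j)" using index_lin_comb[OF car len] ij by simp
      finally show "lin_comb m cs Ms $$ (i,j) = 0\<^sub>m m m $$ (i,j)" using ij by simp
    qed (use car in auto)
    hence z: "\<forall>c\<in>set cs. c = 0" using ind len unfolding lin_indep_mats_def by blast
    show "\<forall>v\<in>?A. a v = 0" using z by (auto simp: cs_def)
  qed
  have "card ?A \<le> V.dim" using V.li_le_dim(2)[OF V.fin_dim _ li] Ac by simp
  moreover have "card ?A = length Ms" using distinct_card[OF distA] by simp
  ultimately show ?thesis using V.dim_is_n by simp
qed

text \<open>The maximum defining \<open>mat_dim\<close> exists, since independent families have length at most \<open>m * m\<close>.\<close>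
lemma length_le_mat_dim:
  assumes V: "V \<subseteq> carrier_mat m m" and Ms: "set Ms \<subseteq> V" and ind: "lin_indep_mats m Ms"
  shows "length Ms \<le> mat_dim m V"
proof -
  have "{length Ms | Ms. set Ms \<subseteq> V \<and> lin_indep_mats m Ms} \<subseteq> {..m * m}"
    using lin_indep_mats_length_le V by fastforce
  hence "finite {length Ms | Ms. set Ms \<subseteq> V \<and> lin_indep_mats m Ms}" by (rule finite_subset) simp
  thus ?thesis unfolding mat_dim_def using Ms ind by (intro Max_ge) auto
qed

lemma eigenvalue_nilpotent_eq_zero:
  assumes A: "(A :: complex mat) \<in> carrier_mat n n" and K: "A ^\<^sub>m K = 0\<^sub>m n n" and ev: "eigenvalue A a"
  shows "a = 0"
proof -
  obtain v where v: "eigenvector A v a" using ev unfolding eigenvalue_def by blast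
  have vc: "v \<in> carrier_vec n" "v \<noteq> 0\<^sub>v n" using v A unfolding eigenvector_def by (auto simp: carrier_matD)
  have "A ^\<^sub>m K *\<^sub>v v = a ^ K \<cdot>\<^sub>v v" by (rule eigenvector_pow[OF A v])
  moreover have "0\<^sub>m n n *\<^sub>v v = 0\<^sub>v n" by (rule eq_vecI) (use vc in \<open>auto simp: scalar_prod_def\<close>)
  ultimately have e: "a ^ K \<cdot>\<^sub>v v = 0\<^sub>v n" using K by simp
  obtain i where i: "i < n" "v $ i \<noteq> 0" using vc by (metis eq_vecI carrier_vecD index_zero_vec(1,2))
  have "(a ^ K \<cdot>\<^sub>v v) $ i = 0" using e i by simp
  hence "a ^ K * v $ i = 0" using i vc by simp
  thus "a = 0" using i by simp
qed

lemma eigenvalue_jordan_matrix: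
  assumes sa: "(s, a) \<in> set n_as" and s: "s \<noteq> 0"
  shows "eigenvalue (jordan_matrix n_as) (a :: complex)"
proof -
  have "char_poly (jordan_matrix n_as) = (\<Prod>(n,a)\<leftarrow>n_as. [:-a,1:]^n)" by (rule jordan_matrix_char_poly)
  hence "poly (char_poly (jordan_matrix n_as)) a = prod_list (map (\<lambda>p. poly p a) (map (\<lambda>(n,b). [:-b,1:]^n) n_as))"
    by (simp add: poly_prod_list)
  moreover have "0 \<in> set (map (\<lambda>p. poly p a) (map (\<lambda>(n,b). [:-b,1:]^n) n_as))"
    using sa s by (force simp: image_iff)
  ultimately have "poly (char_poly (jordan_matrix n_as)) a = 0" by (simp add: prod_list_zero_iff)
  then show ?thesis using eigenvalue_root_char_poly[OF jordan_matrix_carrier[of n_as]] by simp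
qed

lemma nilpotent_jordan_nf:
  assumes N: "(N :: complex mat) \<in> carrier_mat n n" and K: "N ^\<^sub>m K = 0\<^sub>m n n"
  obtains n_as P Q where "similar_mat_wit N (jordan_matrix n_as) P Q" "0 \<notin> fst ` set n_as"
    "\<And>s a. (s,a) \<in> set n_as \<Longrightarrow> a = 0" "sum_list (map fst n_as) = n"
proof -
  obtain as where "char_poly N = (\<Prod>a\<leftarrow>as. [:- a, 1:])" using char_poly_factorized[OF N] by auto
  then obtain n_as where jnf: "jordan_nf N n_as" using jordan_nf_exists[OF N] by blast
  then obtain P Q where w: "similar_mat_wit N (jordan_matrix n_as) P Q" and z: "0 \<notin> fst ` set n_as"
    unfolding jordan_nf_def similar_mat_def by blast
  let ?J = "jordan_matrix n_as"
  have cars: "?J \<in> carrier_mat n n" "P \<in> carrier_mat n n" "Q \<in> carrier_mat n n"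
    using w N unfolding similar_mat_wit_def Let_def by (auto simp: carrier_matD)
  have sz: "sum_list (map fst n_as) = n" using carrier_matD(1)[OF cars(1)] by simp
  have JK: "?J ^\<^sub>m K = 0\<^sub>m n n"
    using similar_mat_wit_pow_id[OF similar_mat_wit_sym[OF w], of K] K cars by simp
  have "a = 0" if "(s,a) \<in> set n_as" for s a
    using eigenvalue_nilpotent_eq_zero[OF cars(1) JK eigenvalue_jordan_matrix[OF that]] z that by force
  with w z sz show thesis using that by blast
qed

lemma index_four_block_diag:
  assumes A: "A \<in> carrier_mat s s" and D: "D \<in> carrier_mat n' n'" and ij: "i < s + n'" "j < s + n'"
  shows "four_block_mat A (0\<^sub>m s n') (0\<^sub>m n' s) D $$ (i,j) =
    (if i < s then if j < s then A $$ (i,j) else 0 else if j < s then 0 else D $$ (i - s, j - s))"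
  using A D ij by (simp add: carrier_matD)

lemma four_block_zero:
  "four_block_mat (0\<^sub>m s s) (0\<^sub>m s n') (0\<^sub>m n' s) (0\<^sub>m n' n') = 0\<^sub>m (s + n') (s + n')"
  by (rule eq_matI) auto

lemma jordan_matrix_pow_zero:
  "(\<And>s a. (s,a) \<in> set n_as \<Longrightarrow> a = (0::complex)) \<Longrightarrow> (\<And>s a. (s,a) \<in> set n_as \<Longrightarrow> s \<le> k) \<Longrightarrow>
  jordan_matrix n_as ^\<^sub>m k = 0\<^sub>m (sum_list (map fst n_as)) (sum_list (map fst n_as))"
proof (induct n_as)
  case Nil
  show ?case by (rule eq_matI) (simp_all add: jordan_matrix_def)
next
  case (Cons sa rest)
  obtain s a where sa: "sa = (s,a)" by force
  have a: "a = 0" using Cons(2) sa by auto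
  have sk: "s \<le> k" using Cons(3) sa by auto
  let ?n' = "sum_list (map fst rest)"
  have IH: "jordan_matrix rest ^\<^sub>m k = 0\<^sub>m ?n' ?n'" using Cons by auto
  have Bk: "jordan_block s (0::complex) ^\<^sub>m k = 0\<^sub>m s s"
    unfolding jordan_block_zero_pow using sk by (intro eq_matI) auto
  have "jordan_matrix (sa # rest) ^\<^sub>m k = four_block_mat (jordan_block s 0 ^\<^sub>m k) (0\<^sub>m s ?n') (0\<^sub>m ?n' s) (jordan_matrix rest ^\<^sub>m k)"
    unfolding sa a jordan_matrix_Cons by (rule pow_four_block_mat) auto
  also have "\<dots> = 0\<^sub>m (s + ?n') (s + ?n')" unfolding Bk IH by (rule four_block_zero)
  finally show ?case using sa by simp
qed

lemma nilpotent_mat_pow_dim: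
  assumes "nilpotent_mat m x" shows "x ^\<^sub>m m = 0\<^sub>m m m"
proof -
  obtain K where x: "x \<in> carrier_mat m m" and K: "x ^\<^sub>m K = 0\<^sub>m m m" using assms unfolding nilpotent_mat_def
    by blast
  obtain n_as P Q where w: "similar_mat_wit x (jordan_matrix n_as) P Q"
    and ev: "\<And>s a. (s,a) \<in> set n_as \<Longrightarrow> a = 0" and sz: "sum_list (map fst n_as) = m"
    using nilpotent_jordan_nf[OF x K] by metis
  have cars: "P \<in> carrier_mat m m" "Q \<in> carrier_mat m m"
    using w x unfolding similar_mat_wit_def Let_def by (auto simp: carrier_matD)
  have le: "s \<le> m" if "(s,a) \<in> set n_as" for s a
    using member_le_sum_list[of s "map fst n_as"] that sz by force
  have "jordan_matrix n_as ^\<^sub>m m = 0\<^sub>m m m" using jordan_matrix_pow_zero[of n_as m] ev le sz by simp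
  moreover have "x ^\<^sub>m m = P * jordan_matrix n_as ^\<^sub>m m * Q" by (rule similar_mat_wit_pow_id[OF w])
  ultimately show ?thesis using cars by simp
qed

lemma jordan_matrix_diag_zero: "(\<And>s a. (s,a) \<in> set n_as \<Longrightarrow> a = 0) \<Longrightarrow> i < sum_list (map fst n_as) \<Longrightarrow>
   jordan_matrix n_as $$ (i,i) = (0::complex)"
proof (induct n_as arbitrary: i)
  case Nil thus ?case by simp
next
  case (Cons sa rest)
  obtain s a where sa: "sa = (s,a)" by force
  have a: "a = 0" using Cons(2) sa by auto
  let ?n' = "sum_list (map fst rest)"
  have "jordan_matrix (sa # rest) $$ (i,i) = (if i < s then jordan_block s a $$ (i,i) else jordan_matrix rest $$ (i - s, i - s))"
    unfolding sa jordan_matrix_Cons using Cons(3) sa by (subst index_four_block_diag) auto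
  moreover have ev': "\<And>s a. (s,a) \<in> set rest \<Longrightarrow> a = 0" using Cons(2) by auto
  moreover have "jordan_matrix rest $$ (i - s, i - s) = 0" if "\<not> i < s"
    by (rule Cons(1)[OF ev']) (use Cons(3) sa that in auto)
  ultimately show ?case using a sa by auto
qed

lemma index_principal_nil_pow:
  "i < s \<Longrightarrow> j < s \<Longrightarrow> (principal_nil s ^\<^sub>m p) $$ (i,j) = (if i \<le> j \<and> j - i = p then 1 else 0)"
  by (simp add: jordan_block_zero_pow)

lemma four_block_diag_commute:
  assumes "A \<in> carrier_mat s s" "A' \<in> carrier_mat s s" "D \<in> carrier_mat n' n'" "D' \<in> carrier_mat n' n'"
    and "A * A' = A' * A" "D * D' = D' * D"
  shows "four_block_mat A (0\<^sub>m s n') (0\<^sub>m n' s) D * four_block_mat A' (0\<^sub>m s n') (0\<^sub>m n' s) D'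
       = four_block_mat A' (0\<^sub>m s n') (0\<^sub>m n' s) D' * four_block_mat A (0\<^sub>m s n') (0\<^sub>m n' s) D"
  using assms by (simp add: mult_four_block_mat[of _ s s _ n' _ n' _ _ s _ n' _ _])

definition block_family :: "nat \<Rightarrow> nat \<Rightarrow> complex mat list \<Rightarrow> complex mat list" where
  "block_family s n' Fs' =
     map (\<lambda>p. four_block_mat (principal_nil s ^\<^sub>m p) (0\<^sub>m s n') (0\<^sub>m n' s) (0\<^sub>m n' n')) [0..<s] @
     map (\<lambda>Z. four_block_mat (0\<^sub>m s s) (0\<^sub>m s n') (0\<^sub>m n' s) Z) Fs'"

lemma set_block_family: "F \<in> set (block_family s n' Fs') \<longleftrightarrow>
    (\<exists>p<s. F = four_block_mat (principal_nil s ^\<^sub>m p) (0\<^sub>m s n') (0\<^sub>m n' s) (0\<^sub>m n' n')) \<or>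
    (\<exists>Z\<in>set Fs'. F = four_block_mat (0\<^sub>m s s) (0\<^sub>m s n') (0\<^sub>m n' s) Z)"
  unfolding block_family_def by auto

lemma length_block_family: "length (block_family s n' Fs') = s + length Fs'"
  by (simp add: block_family_def)

lemma nth_block_family: "l < s + length Fs' \<Longrightarrow> block_family s n' Fs' ! l =
    (if l < s then four_block_mat (principal_nil s ^\<^sub>m l) (0\<^sub>m s n') (0\<^sub>m n' s) (0\<^sub>m n' n')
     else four_block_mat (0\<^sub>m s s) (0\<^sub>m s n') (0\<^sub>m n' s) (Fs' ! (l - s)))"
  by (simp add: block_family_def nth_append)

lemma block_family_carrier:
  "set Fs' \<subseteq> carrier_mat n' n' \<Longrightarrow> set (block_family s n' Fs') \<subseteq> carrier_mat (s + n') (s + n')"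
  unfolding block_family_def by auto

lemma block_family_commute:
  assumes J': "J' \<in> carrier_mat n' n'" and Fc: "set Fs' \<subseteq> carrier_mat n' n'"
    and Fcomm: "\<And>F. F \<in> set Fs' \<Longrightarrow> F * J' = J' * F" and F: "F \<in> set (block_family s n' Fs')"
  defines "J \<equiv> four_block_mat (principal_nil s) (0\<^sub>m s n') (0\<^sub>m n' s) J'"
  shows "F * J = J * F"
  using F[unfolded set_block_family]
proof (elim disjE exE conjE bexE)
  fix p assume "F = four_block_mat (principal_nil s ^\<^sub>m p) (0\<^sub>m s n') (0\<^sub>m n' s) (0\<^sub>m n' n')"
  then show ?thesis unfolding J_def
    using J' pow_mat_comm[of "principal_nil s" s p] by (simp add: four_block_diag_commute)
next
  fix Z assume Z: "Z \<in> set Fs'" and "F = four_block_mat (0\<^sub>m s s) (0\<^sub>m s n') (0\<^sub>m n' s) Z"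
  then show ?thesis unfolding J_def
    using J' Fc Fcomm[OF Z] by (simp add: four_block_diag_commute subset_iff)
qed

lemma block_family_upper_right_zero:
  assumes Fc: "set Fs' \<subseteq> carrier_mat n' n'" and F: "F \<in> set (block_family s n' Fs')"
    and ij: "i < s" "s \<le> j" "j < s + n'"
  shows "F $$ (i,j) = 0"
  using F[unfolded set_block_family]
proof (elim disjE exE conjE bexE)
  fix Z assume Z: "Z \<in> set Fs'" and FZ: "F = four_block_mat (0\<^sub>m s s) (0\<^sub>m s n') (0\<^sub>m n' s) Z"
  have "Z \<in> carrier_mat n' n'" using Z Fc by auto
  then show ?thesis unfolding FZ using ij by (subst index_four_block_diag) auto
qed (use ij in \<open>auto simp: index_four_block_diag\<close>)

text \<open>The \<open>l\<close>-th power of the first block owns the entry \<open>(0, l)\<close>; the embedded matrices keep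
  their own private entries, shifted by \<open>s\<close>.\<close>
lemma private_entries_block_family:
  assumes Fc: "set Fs' \<subseteq> carrier_mat n' n'" and Fw: "private_entries n' Fs'" and Fl: "length Fs' = n'"
  shows "private_entries (s + n') (block_family s n' Fs')"
  unfolding private_entries_def length_block_family Fl
proof (intro allI impI)
  let ?Fs = "block_family s n' Fs'"
  fix l assume l: "l < s + n'"
  have nth: "?Fs ! l' = (if l' < s then four_block_mat (principal_nil s ^\<^sub>m l') (0\<^sub>m s n') (0\<^sub>m n' s) (0\<^sub>m n' n')
     else four_block_mat (0\<^sub>m s s) (0\<^sub>m s n') (0\<^sub>m n' s) (Fs' ! (l' - s)))" if "l' < s + n'" for l'
    using nth_block_family[of l' s Fs' n'] that Fl by simp
  show "\<exists>i j. i < s + n' \<and> j < s + n' \<and> ?Fs ! l $$ (i, j) \<noteq> 0 \<and> (\<forall>l'<s + n'. l' \<noteq> l \<longrightarrow> ?Fs ! l' $$ (i, j) = 0)"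
  proof (cases "l < s")
    case True
    have v: "?Fs ! l $$ (0, l) = 1" using True l
      by (auto simp: nth[OF l] index_four_block_diag index_principal_nil_pow)
    have o: "?Fs ! l' $$ (0, l) = 0" if "l' < s + n'" "l' \<noteq> l" for l'
    proof (cases "l' < s")
      case True thus ?thesis using that \<open>l < s\<close>
        by (auto simp: nth[OF that(1)] index_four_block_diag index_principal_nil_pow)
    next
      case False thus ?thesis using that \<open>l < s\<close> Fl Fc by (auto simp: nth[OF that(1)] index_four_block_diag)
    qed
    show ?thesis using v o True l by (intro exI[of _ 0] exI[of _ l]) auto
  next
    case False
    let ?q = "l - s"
    have q: "?q < length Fs'" using l False Fl by simp
    obtain i j where ij: "i < n'" "j < n'" "Fs' ! ?q $$ (i,j) \<noteq> 0"
      "\<forall>l'<length Fs'. l' \<noteq> ?q \<longrightarrow> Fs' ! l' $$ (i,j) = 0" using Fw q unfolding private_entries_def by blast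
    have Fq: "Fs' ! ?q \<in> carrier_mat n' n'" using Fc q by auto
    have v: "?Fs ! l $$ (s + i, s + j) = Fs' ! ?q $$ (i,j)" using False l ij Fq
      by (auto simp: nth[OF l] index_four_block_diag)
    have o: "?Fs ! l' $$ (s + i, s + j) = 0" if "l' < s + n'" "l' \<noteq> l" for l'
    proof (cases "l' < s")
      case True thus ?thesis using ij that by (auto simp: nth[OF that(1)] index_four_block_diag)
    next
      case False
      have "Fs' ! (l' - s) \<in> carrier_mat n' n'" using Fc that False Fl by auto
      moreover have "Fs' ! (l' - s) $$ (i,j) = 0" using ij(4) that False \<open>\<not> l < s\<close> Fl by auto
      ultimately show ?thesis using False ij that by (auto simp: nth[OF that(1)] index_four_block_diag)
    qed
    show ?thesis using v o ij by (intro exI[of _ "s + i"] exI[of _ "s + j"]) auto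
  qed
qed

lemma jordan_matrix_centralizer_family:
  assumes "\<forall>x\<in>set n_as. snd x = (0::complex)"
  obtains Fs where "set Fs \<subseteq> carrier_mat (sum_list (map fst n_as)) (sum_list (map fst n_as))"
    "\<And>F. F \<in> set Fs \<Longrightarrow> F * jordan_matrix n_as = jordan_matrix n_as * F"
    "private_entries (sum_list (map fst n_as)) Fs" "length Fs = sum_list (map fst n_as)"
  using assms
proof (induct n_as arbitrary: thesis)
  case Nil show ?case by (rule Nil(1)[of "[]"]) (simp_all add: private_entries_def)
next
  case (Cons sa rest)
  obtain s where sa: "sa = (s, 0)" using Cons(3) by (cases sa) auto
  let ?n' = "sum_list (map fst rest)"
  obtain Fs' where F': "set Fs' \<subseteq> carrier_mat ?n' ?n'" "\<And>F. F \<in> set Fs' \<Longrightarrow> F * jordan_matrix rest = jordan_matrix rest * F"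
    "private_entries ?n' Fs'" "length Fs' = ?n'" using Cons(1) Cons(3) by auto
  have J: "jordan_matrix (sa # rest) = four_block_mat (principal_nil s) (0\<^sub>m s ?n') (0\<^sub>m ?n' s) (jordan_matrix rest)"
    unfolding sa jordan_matrix_Cons by simp
  show ?case
  proof (rule Cons(2)[of "block_family s ?n' Fs'"])
    show "set (block_family s ?n' Fs') \<subseteq> carrier_mat (sum_list (map fst (sa # rest))) (sum_list (map fst (sa # rest)))"
      using block_family_carrier[OF F'(1)] sa by simp
    show "F * jordan_matrix (sa # rest) = jordan_matrix (sa # rest) * F" if "F \<in> set (block_family s ?n' Fs')" for F
      unfolding J by (rule block_family_commute[OF _ F'(1,2) that]) simp
    show "private_entries (sum_list (map fst (sa # rest))) (block_family s ?n' Fs')"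
      using private_entries_block_family[OF F'(1,3,4)] sa by simp
    show "length (block_family s ?n' Fs') = sum_list (map fst (sa # rest))"
      using F'(4) sa by (simp add: length_block_family)
  qed
qed

lemma private_entries_snoc:
  assumes w: "private_entries n Fs" and z: "\<And>F. F \<in> set Fs \<Longrightarrow> F $$ (i0,j0) = 0"
    and ij0: "i0 < n" "j0 < n" and E0: "E $$ (i0,j0) \<noteq> 0"
    and Ez: "\<And>i j. i < n \<Longrightarrow> j < n \<Longrightarrow> (i,j) \<noteq> (i0,j0) \<Longrightarrow> E $$ (i,j) = 0"
  shows "private_entries n (Fs @ [E])"
  unfolding private_entries_def
proof (intro allI impI)
  fix l assume l: "l < length (Fs @ [E])"
  show "\<exists>i j. i < n \<and> j < n \<and> (Fs @ [E]) ! l $$ (i, j) \<noteq> 0 \<and>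
      (\<forall>l'<length (Fs @ [E]). l' \<noteq> l \<longrightarrow> (Fs @ [E]) ! l' $$ (i, j) = 0)"
  proof (cases "l < length Fs")
    case True
    obtain i j where ij: "i < n" "j < n" "Fs ! l $$ (i,j) \<noteq> 0" "\<forall>l'<length Fs. l' \<noteq> l \<longrightarrow> Fs ! l' $$ (i,j) = 0"
      using w True unfolding private_entries_def by blast
    have "(i,j) \<noteq> (i0,j0)" using z[of "Fs ! l"] True ij by auto
    hence "E $$ (i,j) = 0" using Ez ij by auto
    thus ?thesis using ij True by (intro exI[of _ i] exI[of _ j]) (auto simp: nth_append less_Suc_eq)
  next
    case False
    hence ll: "l = length Fs" using l by simp
    show ?thesis using ij0 E0 z ll by (intro exI[of _ i0] exI[of _ j0]) (auto simp: nth_append less_Suc_eq)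
  qed
qed

lemma corner_unit_commute:
  assumes J: "J \<in> carrier_mat n n" and n: "1 \<le> n"
    and c0: "\<And>i. i < n \<Longrightarrow> J $$ (i,0) = 0" and rl: "\<And>j. j < n \<Longrightarrow> J $$ (n - 1, j) = 0"
  defines "E \<equiv> mat n n (\<lambda>(i,j). if i = 0 \<and> j = n - 1 then 1 else (0::complex))"
  shows "E * J = J * E"
proof -
  have Ec: "E \<in> carrier_mat n n" unfolding E_def by simp
  { fix i j assume ij: "i < n" "j < n"
    have "(E * J) $$ (i,j) = 0"
      by (rule index_mult_mat_zero[OF Ec J ij]) (use rl n ij in \<open>auto simp: E_def\<close>)
    moreover have "(J * E) $$ (i,j) = 0"
      by (rule index_mult_mat_zero[OF J Ec ij]) (use c0 n ij in \<open>auto simp: E_def\<close>)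
    ultimately have "(E * J) $$ (i,j) = (J * E) $$ (i,j)" by simp }
  thus ?thesis using Ec J by (intro eq_matI) auto
qed

lemma lin_indep_mats_conj:
  assumes P: "P \<in> carrier_mat n n" and Q: "Q \<in> carrier_mat n n" and QP: "Q * P = 1\<^sub>m n"
    and Ms: "set Ms \<subseteq> carrier_mat n n" and ind: "lin_indep_mats n Ms"
  shows "lin_indep_mats n (map (\<lambda>Z. P * Z * Q) Ms)"
  unfolding lin_indep_mats_def
proof (intro allI impI)
  fix cs assume h: "length cs = length (map (\<lambda>Z. P * Z * Q) Ms) \<and> lin_comb n cs (map (\<lambda>Z. P * Z * Q) Ms) = 0\<^sub>m n n"
  have "P * lin_comb n cs Ms * Q = 0\<^sub>m n n" using h conj_lin_comb[OF P Q QP Ms] by simp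
  hence "Q * (P * lin_comb n cs Ms * Q) * P = 0\<^sub>m n n" using P Q by simp
  hence "lin_comb n cs Ms = 0\<^sub>m n n" using conj_cancel[OF P Q QP] Ms by simp
  moreover have "length cs = length Ms" using h by simp
  ultimately show "\<forall>c\<in>set cs. c = 0" using ind unfolding lin_indep_mats_def by blast
qed

lemma jordan_matrix_first_col_zero:
  assumes ev: "\<And>s a. (s,a) \<in> set n_as \<Longrightarrow> a = (0::complex)" and i: "i < sum_list (map fst n_as)"
  shows "jordan_matrix n_as $$ (i,0) = 0"
proof (cases "i = 0")
  case True thus ?thesis using jordan_matrix_diag_zero[OF ev i] by simp
next
  case False thus ?thesis using jordan_matrix_upper_triangular[OF i, of 0] by simp
qed

lemma jordan_matrix_last_row_zero:
  assumes ev: "\<And>s a. (s,a) \<in> set n_as \<Longrightarrow> a = (0::complex)" and j: "j < sum_list (map fst n_as)"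
  shows "jordan_matrix n_as $$ (sum_list (map fst n_as) - 1, j) = 0"
proof (cases "j = sum_list (map fst n_as) - 1")
  case True thus ?thesis using jordan_matrix_diag_zero[OF ev, where i = j] j by simp
next
  case False show ?thesis by (rule jordan_matrix_upper_triangular) (use j False in auto)
qed

text \<open>Besides the block diagonal family, the matrix unit in the top right corner commutes with a
  nilpotent Jordan matrix with at least two blocks, since its first column and last row vanish.\<close>
lemma jordan_matrix_centralizer_two_blocks:
  assumes ev: "\<forall>x\<in>set rest. snd x = (0::complex)" and s0: "s \<noteq> 0"
    and n'0: "sum_list (map fst rest) \<noteq> 0"
  defines "n \<equiv> s + sum_list (map fst rest)" and "J \<equiv> jordan_matrix ((s, 0) # rest)"
  obtains Ms where "set Ms \<subseteq> carrier_mat n n" "\<And>F. F \<in> set Ms \<Longrightarrow> F * J = J * F"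
    "lin_indep_mats n Ms" "length Ms = Suc n"
proof -
  let ?n' = "sum_list (map fst rest)"
  have n1: "1 \<le> n" using s0 by (simp add: n_def)
  have n'1: "1 \<le> ?n'" using n'0 by linarith
  have Jc: "J \<in> carrier_mat n n" using jordan_matrix_carrier[of "(s, 0) # rest"] by (simp add: J_def n_def)
  have J: "J = four_block_mat (principal_nil s) (0\<^sub>m s ?n') (0\<^sub>m ?n' s) (jordan_matrix rest)"
    unfolding J_def jordan_matrix_Cons by simp
  have ev_all: "\<And>t a. (t, a) \<in> set ((s, 0) # rest) \<Longrightarrow> a = 0" using ev by fastforce
  have sz: "sum_list (map fst ((s, 0) # rest)) = n" by (simp add: n_def)
  obtain Fs' where F': "set Fs' \<subseteq> carrier_mat ?n' ?n'"
    "\<And>F. F \<in> set Fs' \<Longrightarrow> F * jordan_matrix rest = jordan_matrix rest * F"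
    "private_entries ?n' Fs'" "length Fs' = ?n'" using jordan_matrix_centralizer_family[OF ev] by blast
  let ?Fs = "block_family s ?n' Fs'"
  define E where "E = mat n n (\<lambda>(i,j). if i = 0 \<and> j = n - 1 then 1 else (0::complex))"
  have Ec: "E \<in> carrier_mat n n" unfolding E_def by simp
  have EJ: "E * J = J * E" unfolding E_def
  proof (rule corner_unit_commute[OF Jc n1])
    show "J $$ (i, 0) = 0" if "i < n" for i
      using that unfolding J_def sz[symmetric] by (intro jordan_matrix_first_col_zero ev_all)
    show "J $$ (n - 1, j) = 0" if "j < n" for j
      using that unfolding J_def sz[symmetric] by (intro jordan_matrix_last_row_zero ev_all)
  qed
  let ?Ms = "?Fs @ [E]"
  have "set ?Ms \<subseteq> carrier_mat n n" using block_family_carrier[OF F'(1)] Ec by (auto simp: n_def)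
  moreover have "F * J = J * F" if "F \<in> set ?Ms" for F
    using that block_family_commute[OF _ F'(1,2)] EJ J by auto
  moreover have "private_entries n ?Ms"
  proof (rule private_entries_snoc[of n ?Fs 0 "n - 1" E])
    show "private_entries n ?Fs" using private_entries_block_family[OF F'(1,3,4)] by (simp add: n_def)
    show "F $$ (0, n - 1) = 0" if "F \<in> set ?Fs" for F
      by (rule block_family_upper_right_zero[OF F'(1) that]) (use s0 n'1 in \<open>auto simp: n_def\<close>)
    show "0 < n" "n - 1 < n" using n1 by auto
    show "E $$ (0, n - 1) \<noteq> 0" using n1 by (simp add: E_def)
    show "E $$ (i, j) = 0" if "i < n" "j < n" "(i, j) \<noteq> (0, n - 1)" for i j
      using that by (simp add: E_def)
  qed
  moreover have "length ?Ms = Suc n" using F'(4) by (simp add: n_def length_block_family)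
  ultimately show thesis using that lin_indep_mats_if_private_entries by blast
qed

lemma length_le_mat_dim_centralizer_similar:
  assumes w: "similar_mat_wit N J P Q" and N: "N \<in> carrier_mat n n"
    and Ms: "set Ms \<subseteq> carrier_mat n n" and comm: "\<And>F. F \<in> set Ms \<Longrightarrow> F * J = J * F"
    and ind: "lin_indep_mats n Ms"
  shows "length Ms \<le> mat_dim n (centralizer n N)"
proof -
  have cars: "J \<in> carrier_mat n n" "P \<in> carrier_mat n n" "Q \<in> carrier_mat n n"
    and QP: "Q * P = 1\<^sub>m n" and NPJQ: "N = P * J * Q"
    using w N unfolding similar_mat_wit_def Let_def by (auto simp: carrier_matD)
  let ?Ms2 = "map (\<lambda>Z. P * Z * Q) Ms"
  have cen: "set ?Ms2 \<subseteq> centralizer n N"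
  proof
    fix Y assume "Y \<in> set ?Ms2"
    then obtain Z where Z: "Z \<in> set Ms" "Y = P * Z * Q" by auto
    have Zc: "Z \<in> carrier_mat n n" using Ms Z by auto
    have "lie_bracket Z J = 0\<^sub>m n n" using comm[OF Z(1)] Zc cars unfolding lie_bracket_def by simp
    hence "P * lie_bracket Z J * Q = 0\<^sub>m n n" using cars by simp
    moreover have "P * lie_bracket Z J * Q = lie_bracket Y N"
      using conj_lie_bracket[OF cars(2,3) Zc cars(1) QP] Z NPJQ by simp
    ultimately show "Y \<in> centralizer n N" unfolding centralizer_def using Z Zc cars by auto
  qed
  have "length ?Ms2 \<le> mat_dim n (centralizer n N)"
    by (rule length_le_mat_dim[OF _ cen lin_indep_mats_conj[OF cars(2,3) QP Ms ind]])
      (auto simp: centralizer_def)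
  thus ?thesis by simp
qed

text \<open>A nilpotent matrix with \<open>N ^ (n - 1) = 0\<close> has at least two Jordan blocks, and then its
  centralizer has dimension at least \<open>n + 1\<close>.\<close>
lemma regular_nilpotent_pow_ne_zero:
  assumes R: "regular_nilpotent n N" and n1: "1 \<le> n" shows "N ^\<^sub>m (n - 1) \<noteq> 0\<^sub>m n n"
proof
  assume z: "N ^\<^sub>m (n - 1) = 0\<^sub>m n n"
  have N: "N \<in> carrier_mat n n" using R by (simp add: regular_nilpotent_def nilpotent_mat_def)
  obtain n_as P Q where w: "similar_mat_wit N (jordan_matrix n_as) P Q" and z0: "0 \<notin> fst ` set n_as"
    and ev: "\<And>s a. (s,a) \<in> set n_as \<Longrightarrow> a = 0" and sz: "sum_list (map fst n_as) = n"
    using nilpotent_jordan_nf[OF N z] by metis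
  let ?J = "jordan_matrix n_as"
  have cars: "P \<in> carrier_mat n n" "Q \<in> carrier_mat n n"
    using w N unfolding similar_mat_wit_def Let_def by (auto simp: carrier_matD)
  have JK: "?J ^\<^sub>m (n - 1) = 0\<^sub>m n n"
    using similar_mat_wit_pow_id[OF similar_mat_wit_sym[OF w], of "n - 1"] z cars by simp
  obtain s a rest where nas: "n_as = (s,a) # rest" using sz n1 by (cases n_as) auto
  have a: "a = 0" using ev nas by auto
  have s0: "s \<noteq> 0" using z0 nas by force
  let ?n' = "sum_list (map fst rest)"
  have nsum: "n = s + ?n'" using sz nas by simp
  show False
  proof (cases "rest = []")
    case True
    hence sn: "s = n" using nsum by simp
    have "?J = four_block_mat (principal_nil s) (0\<^sub>m s ?n') (0\<^sub>m ?n' s) (jordan_matrix rest)"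
      unfolding nas a jordan_matrix_Cons by simp
    then have "?J ^\<^sub>m (n - 1) = four_block_mat (principal_nil s ^\<^sub>m (n - 1)) (0\<^sub>m s ?n') (0\<^sub>m ?n' s)
      (jordan_matrix rest ^\<^sub>m (n - 1))"
      by (simp add: pow_four_block_mat)
    then have "(?J ^\<^sub>m (n - 1)) $$ (0, n - 1) = (principal_nil s ^\<^sub>m (n - 1)) $$ (0, n - 1)"
      using sn n1 True by simp
    also have "\<dots> = 1" using sn n1 by (simp add: index_principal_nil_pow)
    finally show False using JK n1 by simp
  next
    case False
    have ev': "\<forall>x\<in>set rest. snd x = 0" using ev nas by (metis list.set_intros(2) prod.collapse)
    have "?n' \<noteq> 0" using False z0 nas by (cases rest) force+
    then obtain Ms where "set Ms \<subseteq> carrier_mat n n" "\<And>F. F \<in> set Ms \<Longrightarrow> F * ?J = ?J * F"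
      "lin_indep_mats n Ms" "length Ms = Suc n"
      using jordan_matrix_centralizer_two_blocks[OF ev' s0] unfolding nas a nsum by metis
    then have "Suc n \<le> mat_dim n (centralizer n N)"
      using length_le_mat_dim_centralizer_similar[OF w N] by metis
    thus False using R by (simp add: regular_nilpotent_def)
  qed
qed

lemma index_mult_mat_vec_sum:
  "A \<in> carrier_mat m n \<Longrightarrow> w \<in> carrier_vec n \<Longrightarrow> r < m \<Longrightarrow> (A *\<^sub>v w) $ r = (\<Sum>l<n. A $$ (r,l) * w $ l)"
  by (simp add: scalar_prod_def lessThan_atLeast0 carrier_matD carrier_vecD)

lemma pow_mat_mult_vec:
  "A \<in> carrier_mat n n \<Longrightarrow> w \<in> carrier_vec n \<Longrightarrow> A ^\<^sub>m a *\<^sub>v (A ^\<^sub>m b *\<^sub>v w) = A ^\<^sub>m (a + b) *\<^sub>v w"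
  using pow_mat_add[of A n a b] assoc_mult_mat_vec[of "A ^\<^sub>m a" n n "A ^\<^sub>m b" n w] by simp

lemma vec_nonzero_obtain_index: "w \<in> carrier_vec n \<Longrightarrow> w \<noteq> 0\<^sub>v n \<Longrightarrow> \<exists>r<n. w $ r \<noteq> 0"
  by (metis eq_vecI carrier_vecD index_zero_vec(1,2))

lemma index_mult_mat_last_row_zero:
  assumes "A \<in> carrier_mat (Suc n) (Suc n)" "B \<in> carrier_mat (Suc n) (Suc n)" "i < Suc n" "j < Suc n"
    and "B $$ (n, j) = 0"
  shows "(A * B) $$ (i,j) = (\<Sum>l<n. A $$ (i,l) * B $$ (l,j))"
  using index_mult_mat_sum[OF assms(1-4)] assms(5) by simp

section \<open>Krylov bases\<close>

definition krylov_mat :: "nat \<Rightarrow> complex mat \<Rightarrow> complex vec \<Rightarrow> complex mat" where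
  "krylov_mat n N v = mat n n (\<lambda>(r, i). (N ^\<^sub>m (n - 1 - i) *\<^sub>v v) $ r)"

lemma krylov_mat_carrier[simp]: "krylov_mat n N v \<in> carrier_mat n n"
    and krylov_mat_dim[simp]: "dim_row (krylov_mat n N v) = n" "dim_col (krylov_mat n N v) = n"
  by (simp_all add: krylov_mat_def)

lemma index_krylov_mat[simp]:
  "r < n \<Longrightarrow> i < n \<Longrightarrow> krylov_mat n N v $$ (r, i) = (N ^\<^sub>m (n - 1 - i) *\<^sub>v v) $ r"
  by (simp add: krylov_mat_def)

text \<open>Applying \<open>N ^ i0\<close>, for \<open>i0\<close> the last nonzero coordinate of \<open>z\<close>, kills every column
  but one and leaves \<open>z $ i0 \<cdot> N ^ (n - 1) v\<close>.\<close>
lemma krylov_mat_injective: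
  assumes N: "(N :: complex mat) \<in> carrier_mat n n" and Nn: "N ^\<^sub>m n = 0\<^sub>m n n" and v: "v \<in> carrier_vec n"
    and cyc: "N ^\<^sub>m (n - 1) *\<^sub>v v \<noteq> 0\<^sub>v n"
    and z: "z \<in> carrier_vec n" and Pz: "krylov_mat n N v *\<^sub>v z = 0\<^sub>v n"
  shows "z = 0\<^sub>v n"
proof (rule ccontr)
  assume nz: "z \<noteq> 0\<^sub>v n"
  let ?P = "krylov_mat n N v"
  have ex: "\<exists>i. i < n \<and> z $ i \<noteq> 0" using vec_nonzero_obtain_index[OF z nz] by blast
  define i0 where "i0 = (GREATEST i. i < n \<and> z $ i \<noteq> 0)"
  have i0: "i0 < n \<and> z $ i0 \<noteq> 0" unfolding i0_def
    by (rule GreatestI_ex_nat[of "\<lambda>i. i < n \<and> z $ i \<noteq> 0" n]) (use ex in auto)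
  have gt: "z $ i = 0" if "i < n" "i0 < i" for i
    using Greatest_le_nat[of "\<lambda>i. i < n \<and> z $ i \<noteq> 0" i n] that unfolding i0_def[symmetric] by force
  have big: "N ^\<^sub>m e = 0\<^sub>m n n" if "n \<le> e" for e using pow_mat_zero_mono[OF N Nn that] .
  have colP: "(N ^\<^sub>m i0 * ?P) $$ (r,l) = (N ^\<^sub>m (i0 + (n - 1 - l)) *\<^sub>v v) $ r" if "r < n" "l < n" for r l
  proof -
    have "(N ^\<^sub>m i0 * ?P) $$ (r,l) = (N ^\<^sub>m i0 *\<^sub>v col ?P l) $ r" using that N by simp
    also have "col ?P l = N ^\<^sub>m (n - 1 - l) *\<^sub>v v" using that N v by (intro eq_vecI) auto
    also have "N ^\<^sub>m i0 *\<^sub>v (N ^\<^sub>m (n - 1 - l) *\<^sub>v v) = N ^\<^sub>m (i0 + (n - 1 - l)) *\<^sub>v v"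
      using pow_mat_mult_vec N v by simp
    finally show ?thesis .
  qed
  have key: "(N ^\<^sub>m i0 *\<^sub>v (?P *\<^sub>v z)) $ r = z $ i0 * (N ^\<^sub>m (n - 1) *\<^sub>v v) $ r" if r: "r < n" for r
  proof -
    have "N ^\<^sub>m i0 *\<^sub>v (?P *\<^sub>v z) = (N ^\<^sub>m i0 * ?P) *\<^sub>v z"
      using N z assoc_mult_mat_vec[of "N ^\<^sub>m i0" n n ?P n z] by simp
    hence "(N ^\<^sub>m i0 *\<^sub>v (?P *\<^sub>v z)) $ r = (\<Sum>l<n. (N ^\<^sub>m i0 * ?P) $$ (r,l) * z $ l)"
      using r N z index_mult_mat_vec_sum[of "N ^\<^sub>m i0 * ?P" n n z r] by simp
    also have "\<dots> = (N ^\<^sub>m i0 * ?P) $$ (r,i0) * z $ i0"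
    proof (rule sum_eq_single)
      show "(N ^\<^sub>m i0 * ?P) $$ (r,l) * z $ l = 0" if "l \<in> {..<n}" "l \<noteq> i0" for l
      proof (cases "l < i0")
        case True
        have "N ^\<^sub>m (i0 + (n - 1 - l)) = 0\<^sub>m n n" using big True i0 by simp
        thus ?thesis using colP[OF r, of l] that r v by simp
      next
        case False then have "i0 < l" using that by simp
        thus ?thesis using gt that by simp
      qed
    qed (use i0 in auto)
    also have "(N ^\<^sub>m i0 * ?P) $$ (r,i0) = (N ^\<^sub>m (n - 1) *\<^sub>v v) $ r" using colP[OF r, of i0] i0 by simp
    finally show ?thesis by (simp add: mult.commute)
  qed
  have cc: "N ^\<^sub>m (n - 1) *\<^sub>v v \<in> carrier_vec n" by (rule mult_mat_vec_carrier[of _ n n]) (use N v in auto)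
  obtain r where r: "r < n" "(N ^\<^sub>m (n - 1) *\<^sub>v v) $ r \<noteq> 0" using vec_nonzero_obtain_index[OF cc cyc] by blast
  have "(N ^\<^sub>m i0 *\<^sub>v (?P *\<^sub>v z)) $ r = 0" using Pz r N by (simp add: scalar_prod_def)
  thus False using key[OF r(1)] r(2) i0 by simp
qed

definition block_diag_one :: "nat \<Rightarrow> complex mat \<Rightarrow> complex mat" where
  "block_diag_one n P = mat (Suc n) (Suc n)
     (\<lambda>(r, i). if r < n \<and> i < n then P $$ (r, i) else if r = n \<and> i = n then 1 else 0)"

lemma block_diag_one_carrier[simp]: "block_diag_one n P \<in> carrier_mat (Suc n) (Suc n)"
    and block_diag_one_dim[simp]: "dim_row (block_diag_one n P) = Suc n" "dim_col (block_diag_one n P) = Suc n"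
  by (simp_all add: block_diag_one_def)

lemma index_block_diag_one:
  "r < Suc n \<Longrightarrow> i < Suc n \<Longrightarrow>
   block_diag_one n P $$ (r, i) = (if r < n \<and> i < n then P $$ (r, i) else if r = n \<and> i = n then 1 else 0)"
  by (simp add: block_diag_one_def)

lemma block_diag_one_injective:
  assumes P: "P \<in> carrier_mat n n" and inj: "\<And>z. z \<in> carrier_vec n \<Longrightarrow> P *\<^sub>v z = 0\<^sub>v n \<Longrightarrow> z = 0\<^sub>v n"
    and y: "y \<in> carrier_vec (Suc n)" and ky: "block_diag_one n P *\<^sub>v y = 0\<^sub>v (Suc n)"
  shows "y = 0\<^sub>v (Suc n)"
proof -
  let ?k = "block_diag_one n P"
  have yn: "y $ n = 0"
  proof -
    have "(?k *\<^sub>v y) $ n = (\<Sum>l<Suc n. ?k $$ (n,l) * y $ l)" by (rule index_mult_mat_vec_sum) (use y in auto)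
    also have "\<dots> = ?k $$ (n,n) * y $ n" by (rule sum_eq_single) (auto simp: index_block_diag_one)
    also have "\<dots> = y $ n" by (simp add: index_block_diag_one)
    finally show ?thesis using ky by simp
  qed
  define z where "z = vec n (\<lambda>i. y $ i)"
  have zc: "z \<in> carrier_vec n" by (simp add: z_def)
  have "P *\<^sub>v z = 0\<^sub>v n"
  proof (rule eq_vecI)
    fix r assume "r < dim_vec (0\<^sub>v n)" hence r: "r < n" by simp
    have "0 = (?k *\<^sub>v y) $ r" using ky r by simp
    also have "\<dots> = (\<Sum>l<Suc n. ?k $$ (r,l) * y $ l)"
      by (rule index_mult_mat_vec_sum[of _ "Suc n"]) (use r y in auto)
    also have "\<dots> = (\<Sum>l<n. P $$ (r,l) * z $ l)"
      using r yn by (auto simp: index_block_diag_one z_def intro!: sum.cong)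
    also have "\<dots> = (P *\<^sub>v z) $ r" by (rule index_mult_mat_vec_sum[OF P zc r, symmetric])
    finally show "(P *\<^sub>v z) $ r = 0\<^sub>v n $ r" using r by simp
  qed (use P in simp)
  hence z0: "z = 0\<^sub>v n" using inj[OF zc] by simp
  show ?thesis
  proof (rule eq_vecI)
    fix i assume "i < dim_vec (0\<^sub>v (Suc n))"
    then consider "i = n" | "i < n" by fastforce
    then show "y $ i = 0\<^sub>v (Suc n) $ i"
    proof cases
      case 2
      then have "y $ i = z $ i" by (simp add: z_def)
      then show ?thesis using z0 2 by simp
    qed (use yn in simp)
  qed (use y in simp)
qed

lemma block_diag_one_in_K_grp:
  assumes P: "P \<in> carrier_mat n n" and inj: "\<And>z. z \<in> carrier_vec n \<Longrightarrow> P *\<^sub>v z = 0\<^sub>v n \<Longrightarrow> z = 0\<^sub>v n"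
  obtains k' where "block_diag_one n P \<in> K_grp n" "k' \<in> carrier_mat (Suc n) (Suc n)"
    "block_diag_one n P * k' = 1\<^sub>m (Suc n)" "k' * block_diag_one n P = 1\<^sub>m (Suc n)"
proof -
  let ?k = "block_diag_one n P"
  have det: "det ?k \<noteq> 0"
    using det_0_iff_vec_prod_zero[OF block_diag_one_carrier] block_diag_one_injective[OF P inj] by blast
  obtain k' where k': "k' \<in> carrier_mat (Suc n) (Suc n)" "k' * ?k = 1\<^sub>m (Suc n)" "?k * k' = 1\<^sub>m (Suc n)"
    using det_non_zero_imp_unit[OF block_diag_one_carrier det, of "()"]
    unfolding Units_def by (auto simp: ring_mat_simps)
  have "?k \<in> K_grp n"
    unfolding K_grp_def invertible_mat_def inverts_mat_def
    using k' by (auto simp: index_block_diag_one carrier_matD)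
  with k' show thesis using that by blast
qed

text \<open>In the basis \<open>N ^ (n - 1) v, \<dots>, N v, v, e\<^sub>n\<close> the first \<open>n\<close> rows of \<open>x\<close> act as the shift.\<close>
lemma mult_block_diag_krylov_rows:
  assumes x: "x \<in> carrier_mat (Suc n) (Suc n)" and n1: "1 \<le> n"
    and Nn: "upper_left n x ^\<^sub>m n = 0\<^sub>m n n" and i: "i < n" and j: "j < Suc n"
  defines "k \<equiv> block_diag_one n (krylov_mat n (upper_left n x) (vec n (\<lambda>i. x $$ (i, n))))"
  shows "(x * k) $$ (i, j) = (k * principal_nil (Suc n)) $$ (i, j)"
proof -
  define N where "N = upper_left n x"
  define v where "v = vec n (\<lambda>i. x $$ (i, n))"
  have Nc: "N \<in> carrier_mat n n" by (simp add: N_def upper_left_def)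
  have vc: "v \<in> carrier_vec n" by (simp add: v_def)
  have kc: "k \<in> carrier_mat (Suc n) (Suc n)" by (simp add: k_def)
  have kidx: "k $$ (r, l) = (if r < n \<and> l < n then krylov_mat n N v $$ (r, l) else if r = n \<and> l = n then 1 else 0)"
    if "r < Suc n" "l < Suc n" for r l
    using that by (simp add: k_def N_def v_def index_block_diag_one)
  have kJ: "(k * principal_nil (Suc n)) $$ (i,j) = (if 0 < j then k $$ (i, j - 1) else 0)"
    by (rule index_mult_principal_nil[OF kc]) (use i j in auto)
  show ?thesis
  proof (cases "j = n")
    case True
    have "(x * k) $$ (i,j) = (\<Sum>l<Suc n. x $$ (i,l) * k $$ (l,j))"
      by (rule index_mult_mat_sum[OF x kc]) (use i j in auto)
    also have "\<dots> = x $$ (i,n) * k $$ (n,j)" by (rule sum_eq_single) (use True in \<open>auto simp: kidx\<close>)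
    also have "\<dots> = v $ i" using i True by (simp add: kidx v_def)
    also have "\<dots> = (k * principal_nil (Suc n)) $$ (i,j)" using kJ True n1 i Nc vc by (simp add: kidx)
    finally show ?thesis .
  next
    case False
    hence jn: "j < n" using j by simp
    have vj: "N ^\<^sub>m (n - 1 - j) *\<^sub>v v \<in> carrier_vec n"
      by (rule mult_mat_vec_carrier[of _ n n]) (use Nc vc in auto)
    have "(x * k) $$ (i,j) = (\<Sum>l<n. x $$ (i,l) * k $$ (l,j))"
      by (rule index_mult_mat_last_row_zero[OF x kc]) (use i j jn in \<open>auto simp: kidx\<close>)
    also have "\<dots> = (\<Sum>l<n. N $$ (i,l) * (N ^\<^sub>m (n - 1 - j) *\<^sub>v v) $ l)"
      by (rule sum.cong) (use i jn in \<open>auto simp: kidx N_def upper_left_def\<close>)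
    also have "\<dots> = (N *\<^sub>v (N ^\<^sub>m (n - 1 - j) *\<^sub>v v)) $ i"
      by (rule index_mult_mat_vec_sum[OF Nc vj i, symmetric])
    also have "N *\<^sub>v (N ^\<^sub>m (n - 1 - j) *\<^sub>v v) = N ^\<^sub>m (Suc (n - 1 - j)) *\<^sub>v v"
      using pow_mat_mult_vec[OF Nc vc, of 1 "n - 1 - j"] Nc by (simp add: carrier_matD)
    finally have xk: "(x * k) $$ (i,j) = (N ^\<^sub>m (Suc (n - 1 - j)) *\<^sub>v v) $ i" .
    show ?thesis
    proof (cases "j = 0")
      case True
      have "N ^\<^sub>m (Suc (n - 1 - j)) = 0\<^sub>m n n" using True n1 Nn by (simp add: N_def)
      thus ?thesis using xk kJ i vc True by (simp add: scalar_prod_def)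
    next
      case False
      have "n - 1 - (j - 1) = Suc (n - 1 - j)" using False jn by simp
      thus ?thesis using xk kJ False i jn by (simp add: kidx)
    qed
  qed
qed

text \<open>A nilpotent matrix whose first \<open>n\<close> rows are those of the principal nilpotent is the
  principal nilpotent: its last row vanishes because \<open>X ^ n\<close> has first row \<open>e\<^sub>n\<close>.\<close>
lemma eq_principal_nil_if_rows:
  assumes X: "X \<in> carrier_mat (Suc n) (Suc n)" and Xpow: "X ^\<^sub>m Suc n = 0\<^sub>m (Suc n) (Suc n)"
    and rows: "\<And>i j. i < n \<Longrightarrow> j < Suc n \<Longrightarrow> X $$ (i, j) = principal_nil (Suc n) $$ (i, j)"
  shows "X = principal_nil (Suc n)"
proof -
  have first_row: "(X ^\<^sub>m j) $$ (0,c) = (if c = j then 1 else 0)" if "j \<le> n" "c < Suc n" for j c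
    using that
  proof (induct j arbitrary: c)
    case 0 thus ?case using X by (simp add: carrier_matD)
  next
    case (Suc j)
    have "(X ^\<^sub>m Suc j) $$ (0,c) = (X ^\<^sub>m j * X) $$ (0,c)" by simp
    also have "\<dots> = (X ^\<^sub>m j) $$ (0,j) * X $$ (j,c)"
      by (rule index_mult_mat_single[of _ "Suc n"]) (use Suc X in auto)
    also have "\<dots> = principal_nil (Suc n) $$ (j,c)" using Suc by (simp add: rows)
    also have "\<dots> = (if c = Suc j then 1 else 0)" using Suc by simp
    finally show ?case .
  qed
  have last_row: "X $$ (n,c) = 0" if c: "c < Suc n" for c
  proof -
    have "(X ^\<^sub>m Suc n) $$ (0,c) = (X ^\<^sub>m n * X) $$ (0,c)" by simp
    also have "\<dots> = (X ^\<^sub>m n) $$ (0,n) * X $$ (n,c)"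
      by (rule index_mult_mat_single[of _ "Suc n"]) (use c X first_row in auto)
    also have "\<dots> = X $$ (n,c)" using first_row[of n n] by simp
    finally show ?thesis using Xpow c by simp
  qed
  show ?thesis
  proof (rule eq_matI)
    fix i j assume "i < dim_row (principal_nil (Suc n))" "j < dim_col (principal_nil (Suc n))"
    then show "X $$ (i,j) = principal_nil (Suc n) $$ (i,j)"
      using last_row rows by (cases "i = n") auto
  qed (use X in auto)
qed

lemma K_conj_principal_nil:
  assumes n1: "1 \<le> n" and x: "x \<in> carrier_mat (Suc n) (Suc n)" and xn: "x ^\<^sub>m Suc n = 0\<^sub>m (Suc n) (Suc n)"
    and Nn: "upper_left n x ^\<^sub>m n = 0\<^sub>m n n"
    and cyc: "upper_left n x ^\<^sub>m (n - 1) *\<^sub>v vec n (\<lambda>i. x $$ (i, n)) \<noteq> 0\<^sub>v n"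
  obtains k k' where "k \<in> K_grp n" "k' \<in> carrier_mat (Suc n) (Suc n)"
    "k * k' = 1\<^sub>m (Suc n)" "k' * k = 1\<^sub>m (Suc n)" "k' * x * k = principal_nil (Suc n)"
proof -
  let ?P = "krylov_mat n (upper_left n x) (vec n (\<lambda>i. x $$ (i, n)))"
  define k where "k = block_diag_one n ?P"
  have kc: "k \<in> carrier_mat (Suc n) (Suc n)" by (simp add: k_def)
  have "\<And>z. z \<in> carrier_vec n \<Longrightarrow> ?P *\<^sub>v z = 0\<^sub>v n \<Longrightarrow> z = 0\<^sub>v n"
    by (rule krylov_mat_injective[OF _ Nn _ cyc]) (auto simp: upper_left_def)
  then obtain k' where kK: "k \<in> K_grp n" and k': "k' \<in> carrier_mat (Suc n) (Suc n)"
    "k * k' = 1\<^sub>m (Suc n)" "k' * k = 1\<^sub>m (Suc n)"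
    using block_diag_one_in_K_grp[of ?P n] unfolding k_def by auto
  have k'_last_col: "k' $$ (i, n) = 0" if i: "i < n" for i
  proof -
    have "(k' * k) $$ (i, n) = k' $$ (i,n) * k $$ (n,n)"
      by (rule index_mult_mat_single[OF k'(1) kc]) (use i in \<open>auto simp: k_def index_block_diag_one\<close>)
    thus ?thesis using k'(3) i by (simp add: k_def index_block_diag_one)
  qed
  have "k' * x * k = principal_nil (Suc n)"
  proof (rule eq_principal_nil_if_rows)
    show "k' * x * k \<in> carrier_mat (Suc n) (Suc n)" using k' x kc by simp
    have "similar_mat_wit (k' * x * k) x k' k"
      unfolding similar_mat_wit_def Let_def using k' x kc by (auto simp: carrier_matD)
    then show "(k' * x * k) ^\<^sub>m Suc n = 0\<^sub>m (Suc n) (Suc n)"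
      using similar_mat_wit_pow_id[of _ x k' k "Suc n"] xn k' kc by simp
    fix i j assume i: "i < n" and j: "j < Suc n"
    have rows: "(x * k) $$ (l, j) = (k * principal_nil (Suc n)) $$ (l, j)" if "l < n" for l
      unfolding k_def by (rule mult_block_diag_krylov_rows[OF x n1 Nn that j])
    have "(k' * x * k) $$ (i,j) = (k' * (x * k)) $$ (i,j)" using k' x kc by simp
    also have "\<dots> = (\<Sum>l<Suc n. k' $$ (i,l) * (x * k) $$ (l,j))"
      by (rule index_mult_mat_sum) (use k' x kc i j in auto)
    also have "\<dots> = (\<Sum>l<Suc n. k' $$ (i,l) * (k * principal_nil (Suc n)) $$ (l,j))"
    proof (rule sum.cong[OF refl])
      fix l assume "l \<in> {..<Suc n}"
      then show "k' $$ (i,l) * (x * k) $$ (l,j) = k' $$ (i,l) * (k * principal_nil (Suc n)) $$ (l,j)"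
        using rows k'_last_col[OF i] by (cases "l = n") auto
    qed
    also have "\<dots> = (k' * (k * principal_nil (Suc n))) $$ (i,j)"
      by (rule index_mult_mat_sum[symmetric]) (use k' kc i j in auto)
    also have "k' * (k * principal_nil (Suc n)) = (k' * k) * principal_nil (Suc n)"
      by (rule assoc_mult_mat[symmetric]) (use k' kc in auto)
    also have "\<dots> = principal_nil (Suc n)" using k'(3) by simp
    finally show "(k' * x * k) $$ (i,j) = principal_nil (Suc n) $$ (i,j)" .
  qed
  with kK k' show thesis using that by blast
qed

section \<open>The two orbits\<close>

definition reversal_mat :: "nat \<Rightarrow> complex mat" where "reversal_mat m = mat m m (\<lambda>(i,j). if i + j = m - 1 then 1 else 0)"

lemma reversal_mat_carrier[simp]: "reversal_mat m \<in> carrier_mat m m" by (simp add: reversal_mat_def)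
lemma reversal_mat_dim[simp]:
  "dim_row (reversal_mat m) = m" "dim_col (reversal_mat m) = m" by (simp_all add: reversal_mat_def)

lemma index_reversal_mult:
  assumes A: "A \<in> carrier_mat m m" and ij: "i < m" "j < m"
  shows "(reversal_mat m * A) $$ (i,j) = A $$ (m - 1 - i, j)"
proof -
  have "(reversal_mat m * A) $$ (i,j) = reversal_mat m $$ (i, m - 1 - i) * A $$ (m - 1 - i, j)"
    by (rule index_mult_mat_single[OF reversal_mat_carrier A ij]) (use ij in \<open>auto simp: reversal_mat_def\<close>)
  thus ?thesis using ij by (simp add: reversal_mat_def)
qed

lemma index_mult_reversal:
  assumes A: "A \<in> carrier_mat m m" and ij: "i < m" "j < m"
  shows "(A * reversal_mat m) $$ (i,j) = A $$ (i, m - 1 - j)"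
proof -
  have "(A * reversal_mat m) $$ (i,j) = A $$ (i, m - 1 - j) * reversal_mat m $$ (m - 1 - j, j)"
    by (rule index_mult_mat_single[OF A reversal_mat_carrier ij]) (use ij in \<open>auto simp: reversal_mat_def\<close>)
  thus ?thesis using ij by (simp add: reversal_mat_def)
qed

lemma index_reversal_conj:
  assumes A: "A \<in> carrier_mat m m" and ij: "i < m" "j < m"
  shows "(reversal_mat m * A * reversal_mat m) $$ (i,j) = A $$ (m - 1 - i, m - 1 - j)"
  using index_mult_reversal[of "reversal_mat m * A" m i j] index_reversal_mult[OF A, of i "m - 1 - j"] A ij
    by simp

lemma reversal_mat_square: "reversal_mat m * reversal_mat m = 1\<^sub>m m"
proof (rule eq_matI)
  fix i j assume "i < dim_row (1\<^sub>m m)" "j < dim_col (1\<^sub>m m)"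
  hence ij: "i < m" "j < m" by auto
  show "(reversal_mat m * reversal_mat m) $$ (i,j) = 1\<^sub>m m $$ (i,j)"
    using index_reversal_mult[OF reversal_mat_carrier ij] ij by (auto simp: reversal_mat_def)
qed auto

lemma reversal_conj_upper_borel:
  "(\<lambda>A. reversal_mat m * A * reversal_mat m) ` upper_borel m = lower_borel m"
proof
  show "(\<lambda>A. reversal_mat m * A * reversal_mat m) ` upper_borel m \<subseteq> lower_borel m"
  proof
    fix B assume "B \<in> (\<lambda>A. reversal_mat m * A * reversal_mat m) ` upper_borel m"
    then obtain A where A: "A \<in> upper_borel m" "B = reversal_mat m * A * reversal_mat m" by blast
    have Ac: "A \<in> carrier_mat m m" using A by (simp add: upper_borel_def)
    show "B \<in> lower_borel m" unfolding lower_borel_def A(2)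
    proof (intro CollectI conjI allI impI)
      show "reversal_mat m * A * reversal_mat m \<in> carrier_mat m m" using Ac by simp
      fix i j assume ij: "i < j \<and> j < m"
      have "(reversal_mat m * A * reversal_mat m) $$ (i,j) = A $$ (m - 1 - i, m - 1 - j)"
        by (rule index_reversal_conj[OF Ac]) (use ij in auto)
      also have "\<dots> = 0" using A(1) ij by (auto simp: upper_borel_def)
      finally show "(reversal_mat m * A * reversal_mat m) $$ (i,j) = 0" .
    qed
  qed
next
  show "lower_borel m \<subseteq> (\<lambda>A. reversal_mat m * A * reversal_mat m) ` upper_borel m"
  proof
    fix B assume B: "B \<in> lower_borel m"
    have Bc: "B \<in> carrier_mat m m" using B by (simp add: lower_borel_def)
    have "reversal_mat m * B * reversal_mat m \<in> upper_borel m" unfolding upper_borel_def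
    proof (intro CollectI conjI allI impI)
      show "reversal_mat m * B * reversal_mat m \<in> carrier_mat m m" using Bc by simp
      fix i j assume ij: "j < i \<and> i < m"
      have "(reversal_mat m * B * reversal_mat m) $$ (i,j) = B $$ (m - 1 - i, m - 1 - j)"
        by (rule index_reversal_conj[OF Bc]) (use ij in auto)
      also have "\<dots> = 0" using B ij by (auto simp: lower_borel_def)
      finally show "(reversal_mat m * B * reversal_mat m) $$ (i,j) = 0" .
    qed
    moreover have "B = reversal_mat m * (reversal_mat m * B * reversal_mat m) * reversal_mat m"
      using conj_cancel[OF reversal_mat_carrier reversal_mat_carrier reversal_mat_square Bc] by simp
    ultimately show "B \<in> (\<lambda>A. reversal_mat m * A * reversal_mat m) ` upper_borel m" by blast
  qed
qed

lemma reversal_conj_transpose_principal_nil: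
  "reversal_mat m * transpose_mat (principal_nil m) * reversal_mat m = principal_nil m"
proof (rule eq_matI)
  fix i j assume "i < dim_row (principal_nil m)" "j < dim_col (principal_nil m)"
  hence ij: "i < m" "j < m" by auto
  have "(reversal_mat m * transpose_mat (principal_nil m) * reversal_mat m) $$ (i,j) = transpose_mat (principal_nil m) $$ (m - 1 - i, m - 1 - j)"
    by (rule index_reversal_conj) (use ij in auto)
  also have "\<dots> = principal_nil m $$ (m - 1 - j, m - 1 - i)" using ij by simp
  also have "\<dots> = principal_nil m $$ (i,j)" using ij by auto
  finally show "(reversal_mat m * transpose_mat (principal_nil m) * reversal_mat m) $$ (i,j) = principal_nil m $$ (i,j)" .
qed auto

lemma K_grp_inverse:
  assumes k: "k \<in> K_grp n" and k': "k' \<in> carrier_mat (Suc n) (Suc n)"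
    and kk': "k * k' = 1\<^sub>m (Suc n)" and k'k: "k' * k = 1\<^sub>m (Suc n)"
  shows "k' \<in> K_grp n"
proof -
  have kc: "k \<in> carrier_mat (Suc n) (Suc n)" and kz: "\<And>i. i < n \<Longrightarrow> k $$ (i, n) = 0 \<and> k $$ (n, i) = 0"
    using k unfolding K_grp_def by auto
  have nn: "(k * k') $$ (n,n) = k $$ (n,n) * k' $$ (n,n)"
    by (rule index_mult_mat_single[OF kc k']) (use kz in auto)
  hence "k $$ (n,n) * k' $$ (n,n) = 1" using kk' by simp
  hence knn: "k $$ (n,n) \<noteq> 0" by (metis mult_zero_left zero_neq_one)
  have c1: "k' $$ (i, n) = 0" if i: "i < n" for i
  proof -
    have "(k' * k) $$ (i,n) = k' $$ (i,n) * k $$ (n,n)"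
      by (rule index_mult_mat_single[OF k' kc]) (use kz i in auto)
    thus ?thesis using k'k i knn by simp
  qed
  have c2: "k' $$ (n, i) = 0" if i: "i < n" for i
  proof -
    have "(k * k') $$ (n,i) = k $$ (n,n) * k' $$ (n,i)"
      by (rule index_mult_mat_single[OF kc k']) (use kz i in auto)
    thus ?thesis using kk' i knn by simp
  qed
  show ?thesis unfolding K_grp_def invertible_mat_def inverts_mat_def
    using k' kc kk' k'k c1 c2 by (auto simp: carrier_matD)
qed

lemma K_grp_transpose:
  assumes k: "k \<in> K_grp n" and k': "k' \<in> carrier_mat (Suc n) (Suc n)"
    and kk': "k * k' = 1\<^sub>m (Suc n)" and k'k: "k' * k = 1\<^sub>m (Suc n)"
  shows "transpose_mat k \<in> K_grp n"
proof -
  have kc: "k \<in> carrier_mat (Suc n) (Suc n)" and kz: "\<And>i. i < n \<Longrightarrow> k $$ (i, n) = 0 \<and> k $$ (n, i) = 0"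
    using k unfolding K_grp_def by auto
  have 1: "transpose_mat k * transpose_mat k' = 1\<^sub>m (Suc n)"
    using transpose_mult[OF k' kc] k'k by simp
  have 2: "transpose_mat k' * transpose_mat k = 1\<^sub>m (Suc n)"
    using transpose_mult[OF kc k'] kk' by simp
  show ?thesis unfolding K_grp_def invertible_mat_def inverts_mat_def
    using kc k' 1 2 kz by (auto simp: carrier_matD intro!: exI[of _ "transpose_mat k'"])
qed

lemma reversal_mat_cancel_left: "X \<in> carrier_mat m m \<Longrightarrow> reversal_mat m * (reversal_mat m * X) = X"
  using reversal_mat_square[of m] assoc_mult_mat[of "reversal_mat m" m m "reversal_mat m" m X m] by simp

lemma index_embed_gl_mult:
  assumes x: "x \<in> carrier_mat (Suc n) (Suc n)" and ij: "i < Suc n" "j < Suc n"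
  shows "(embed_gl n A * x) $$ (i,j) = (if i < n then (\<Sum>l<n. A $$ (i,l) * x $$ (l,j)) else 0)"
proof -
  have "(embed_gl n A * x) $$ (i,j) = (\<Sum>l<Suc n. embed_gl n A $$ (i,l) * x $$ (l,j))"
    by (rule index_mult_mat_sum) (use x ij in \<open>auto simp: embed_gl_def\<close>)
  also have "\<dots> = (if i < n then (\<Sum>l<n. A $$ (i,l) * x $$ (l,j)) else 0)"
    using ij by (auto simp: embed_gl_def intro!: sum.cong)
  finally show ?thesis .
qed

lemma index_mult_embed_gl:
  assumes x: "x \<in> carrier_mat (Suc n) (Suc n)" and ij: "i < Suc n" "j < Suc n"
  shows "(x * embed_gl n A) $$ (i,j) = (if j < n then (\<Sum>l<n. x $$ (i,l) * A $$ (l,j)) else 0)"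
proof -
  have "(x * embed_gl n A) $$ (i,j) = (\<Sum>l<Suc n. x $$ (i,l) * embed_gl n A $$ (l,j))"
    by (rule index_mult_mat_sum) (use x ij in \<open>auto simp: embed_gl_def\<close>)
  also have "\<dots> = (if j < n then (\<Sum>l<n. x $$ (i,l) * A $$ (l,j)) else 0)"
    using ij by (auto simp: embed_gl_def intro!: sum.cong)
  finally show ?thesis .
qed

text \<open>The block form of \<open>[embed_gl n A, x]\<close> has entries \<open>[A, x\<^sub>n]\<close>, \<open>A v\<close>, \<open>- (A\<^sup>T w)\<^sup>T\<close> and \<open>0\<close>,
  where \<open>v\<close> and \<open>w\<^sup>T\<close> are the last column and row of \<open>x\<close>.\<close>
lemma embed_gl_in_centralizer:
  assumes x: "x \<in> carrier_mat (Suc n) (Suc n)" and Ac: "A \<in> carrier_mat n n"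
    and AN: "A * upper_left n x = upper_left n x * A"
    and hv: "A *\<^sub>v vec n (\<lambda>i. x $$ (i,n)) = 0\<^sub>v n"
    and hw: "transpose_mat A *\<^sub>v vec n (\<lambda>i. x $$ (n,i)) = 0\<^sub>v n"
  shows "embed_gl n A \<in> centralizer (Suc n) x"
proof -
  let ?Y = "embed_gl n A"
  let ?N = "upper_left n x"
  have Yc: "?Y \<in> carrier_mat (Suc n) (Suc n)" by (simp add: embed_gl_def)
  have Nc: "?N \<in> carrier_mat n n" by (simp add: upper_left_def)
  have "(?Y * x) $$ (i,j) = (x * ?Y) $$ (i,j)" if ij: "i < Suc n" "j < Suc n" for i j
  proof (cases "i < n"; cases "j < n")
    assume i: "i < n" and j: "j < n"
    have "(\<Sum>l<n. A $$ (i,l) * x $$ (l,j)) = (A * ?N) $$ (i,j)"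
      using index_mult_mat_sum[OF Ac Nc i j] i j by (simp add: upper_left_def)
    moreover have "(\<Sum>l<n. x $$ (i,l) * A $$ (l,j)) = (?N * A) $$ (i,j)"
      using index_mult_mat_sum[OF Nc Ac i j] i j by (simp add: upper_left_def)
    ultimately show ?thesis using index_embed_gl_mult[OF x ij] index_mult_embed_gl[OF x ij] i j AN by simp
  next
    assume i: "i < n" and j: "\<not> j < n"
    have "(\<Sum>l<n. A $$ (i,l) * x $$ (l,j)) = (A *\<^sub>v vec n (\<lambda>i. x $$ (i,n))) $ i"
      using index_mult_mat_vec_sum[OF Ac _ i, of "vec n (\<lambda>i. x $$ (i,n))"] j ij
      by (simp add: not_less_less_Suc_eq)
    thus ?thesis using index_embed_gl_mult[OF x ij] index_mult_embed_gl[OF x ij] i j hv by simp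
  next
    assume "\<not> i < n" and j: "j < n"
    then have i: "i = n" using ij by simp
    have "(\<Sum>l<n. x $$ (i,l) * A $$ (l,j)) = (transpose_mat A *\<^sub>v vec n (\<lambda>i. x $$ (n,i))) $ j"
      using index_mult_mat_vec_sum[of "transpose_mat A" n n "vec n (\<lambda>i. x $$ (n,i))" j] Ac i j ij
      by (simp add: mult.commute)
    thus ?thesis using index_embed_gl_mult[OF x ij] index_mult_embed_gl[OF x ij] i j hw by simp
  next
    assume "\<not> i < n" "\<not> j < n"
    thus ?thesis using index_embed_gl_mult[OF x ij] index_mult_embed_gl[OF x ij] by simp
  qed
  then have "lie_bracket ?Y x = 0\<^sub>m (Suc n) (Suc n)"
    using Yc x by (intro eq_matI) (auto simp: lie_bracket_def carrier_matD)
  thus ?thesis unfolding centralizer_def using Yc by simp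
qed

lemma centralizer_border_zero:
  assumes x: "x \<in> carrier_mat (Suc n) (Suc n)"
    and C: "embed_gl n ` centralizer n (upper_left n x) \<inter> centralizer (Suc n) x = {0\<^sub>m (Suc n) (Suc n)}"
    and Ac: "A \<in> carrier_mat n n" and AN: "A * upper_left n x = upper_left n x * A"
    and hv: "A *\<^sub>v vec n (\<lambda>i. x $$ (i,n)) = 0\<^sub>v n"
    and hw: "transpose_mat A *\<^sub>v vec n (\<lambda>i. x $$ (n,i)) = 0\<^sub>v n"
  shows "A = 0\<^sub>m n n"
proof (rule eq_matI)
  have "A \<in> centralizer n (upper_left n x)"
    using Ac AN unfolding centralizer_def lie_bracket_def by (simp add: upper_left_def)
  then have E0: "embed_gl n A = 0\<^sub>m (Suc n) (Suc n)"
    using embed_gl_in_centralizer[OF x Ac AN hv hw] C by blast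
  fix i j assume "i < dim_row (0\<^sub>m n n)" "j < dim_col (0\<^sub>m n n)"
  then have ij: "i < n" "j < n" by auto
  have "embed_gl n A $$ (i,j) = A $$ (i,j)" using ij by (simp add: embed_gl_def)
  thus "A $$ (i,j) = 0\<^sub>m n n $$ (i,j)" using E0 ij by simp
qed (use Ac in auto)

lemma reversal_transpose_conj_principal_nil:
  assumes k: "k \<in> carrier_mat m m" and k': "k' \<in> carrier_mat m m" and x: "x \<in> carrier_mat m m"
    and J: "k' * transpose_mat x * k = principal_nil m"
  shows "(reversal_mat m * transpose_mat k) * x * (transpose_mat k' * reversal_mat m) = principal_nil m"
proof -
  have "transpose_mat k * x * transpose_mat k' = transpose_mat (k' * transpose_mat x * k)"
    using k k' x by (simp add: transpose_mult[of _ m m _ m] assoc_mult_mat[of _ m m _ m _ m])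
  also have "\<dots> = transpose_mat (principal_nil m)" using J by simp
  finally have "reversal_mat m * (transpose_mat k * x * transpose_mat k') * reversal_mat m = principal_nil m"
    using reversal_conj_transpose_principal_nil by simp
  then show ?thesis
    using k k' x by (simp add: assoc_mult_mat[of _ m m _ m _ m])
qed

lemma conj_image_in_K_orbit:
  assumes "k \<in> K_grp n" "k' \<in> carrier_mat (Suc n) (Suc n)" "k * k' = 1\<^sub>m (Suc n)" "k' * k = 1\<^sub>m (Suc n)"
  shows "(\<lambda>A. k * A * k') ` S \<in> K_orbit n S"
  using assms unfolding K_orbit_def by (auto simp: Setcompr_eq_image)

lemma borel_in_Q_plus_if_cyclic:
  assumes n1: "1 \<le> n" and x: "x \<in> carrier_mat (Suc n) (Suc n)" and xn: "x ^\<^sub>m Suc n = 0\<^sub>m (Suc n) (Suc n)"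
    and Nn: "upper_left n x ^\<^sub>m n = 0\<^sub>m n n"
    and cyc: "upper_left n x ^\<^sub>m (n - 1) *\<^sub>v vec n (\<lambda>i. x $$ (i, n)) \<noteq> 0\<^sub>v n"
    and B: "borel_subalg (Suc n) b" and xb: "x \<in> b"
  shows "b \<in> Q_plus n"
proof -
  obtain k k' where kK: "k \<in> K_grp n" and k': "k' \<in> carrier_mat (Suc n) (Suc n)"
    and kk': "k * k' = 1\<^sub>m (Suc n)" and k'k: "k' * k = 1\<^sub>m (Suc n)"
      and J: "k' * x * k = principal_nil (Suc n)"
    using K_conj_principal_nil[OF n1 x xn Nn cyc] by blast
  have "b = (\<lambda>A. k * A * k') ` upper_borel (Suc n)"
    by (rule borel_subalg_eq_conj_upper[OF B xb _ k' kk' k'k J]) (use kK in \<open>simp add: K_grp_def\<close>)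
  then show ?thesis unfolding Q_plus_def using conj_image_in_K_orbit[OF kK k' kk' k'k] by simp
qed

text \<open>The transposed case: the Krylov argument applied to \<open>x\<^sup>T\<close>, followed by the reversal
  permutation, which exchanges upper and lower triangular matrices.\<close>
lemma borel_in_Q_minus_if_cocyclic:
  assumes n1: "1 \<le> n" and x: "x \<in> carrier_mat (Suc n) (Suc n)" and xn: "x ^\<^sub>m Suc n = 0\<^sub>m (Suc n) (Suc n)"
    and Nn: "upper_left n x ^\<^sub>m n = 0\<^sub>m n n"
    and cyc: "transpose_mat (upper_left n x ^\<^sub>m (n - 1)) *\<^sub>v vec n (\<lambda>i. x $$ (n, i)) \<noteq> 0\<^sub>v n"
    and B: "borel_subalg (Suc n) b" and xb: "x \<in> b"
  shows "b \<in> Q_minus n"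
proof -
  let ?xt = "transpose_mat x" and ?N = "upper_left n x" and ?w = "reversal_mat (Suc n)"
  have xt: "?xt \<in> carrier_mat (Suc n) (Suc n)" using x by simp
  have Nc: "?N \<in> carrier_mat n n" by (simp add: upper_left_def)
  have ult: "upper_left n ?xt = transpose_mat ?N"
    by (rule eq_matI) (use x in \<open>auto simp: upper_left_def\<close>)
  have xtn: "?xt ^\<^sub>m Suc n = 0\<^sub>m (Suc n) (Suc n)" using transpose_pow_mat[OF x, of "Suc n"] xn by simp
  have Ntn: "upper_left n ?xt ^\<^sub>m n = 0\<^sub>m n n" using ult transpose_pow_mat[OF Nc, of n] Nn by simp
  have "vec n (\<lambda>i. ?xt $$ (i, n)) = vec n (\<lambda>i. x $$ (n, i))" using x by (intro eq_vecI) auto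
  then have cyc': "upper_left n ?xt ^\<^sub>m (n - 1) *\<^sub>v vec n (\<lambda>i. ?xt $$ (i, n)) \<noteq> 0\<^sub>v n"
    using cyc ult transpose_pow_mat[OF Nc, of "n - 1"] by simp
  obtain k k' where kK: "k \<in> K_grp n" and k': "k' \<in> carrier_mat (Suc n) (Suc n)"
    and kk': "k * k' = 1\<^sub>m (Suc n)" and k'k: "k' * k = 1\<^sub>m (Suc n)"
      and J: "k' * ?xt * k = principal_nil (Suc n)"
    using K_conj_principal_nil[OF n1 xt xtn Ntn cyc'] by blast
  have kc: "k \<in> carrier_mat (Suc n) (Suc n)" using kK by (simp add: K_grp_def)
  have tkk': "transpose_mat k' * transpose_mat k = 1\<^sub>m (Suc n)" using transpose_mult[OF kc k'] kk' by simp
  have tk'k: "transpose_mat k * transpose_mat k' = 1\<^sub>m (Suc n)" using transpose_mult[OF k' kc] k'k by simp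
  let ?g = "transpose_mat k' * ?w" and ?g' = "?w * transpose_mat k"
  have assoc: "P * Q * R = P * (Q * R)" if "P \<in> carrier_mat (Suc n) (Suc n)" "Q \<in> carrier_mat (Suc n) (Suc n)"
    "R \<in> carrier_mat (Suc n) (Suc n)" for P Q R using that by simp
  have gg': "?g * ?g' = 1\<^sub>m (Suc n)"
    using k' kc tkk' by (simp add: assoc reversal_mat_cancel_left)
  have "?g' * ?g = ?w * ((transpose_mat k * transpose_mat k') * ?w)" using k' kc by (simp add: assoc)
  then have g'g: "?g' * ?g = 1\<^sub>m (Suc n)" using tk'k reversal_mat_square by simp
  have "b = (\<lambda>A. ?g * A * ?g') ` upper_borel (Suc n)"
    by (rule borel_subalg_eq_conj_upper[OF B xb _ _ gg' g'g reversal_transpose_conj_principal_nil[OF kc k' x J]])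
      (use k' kc in simp_all)
  also have "\<dots> = (\<lambda>A. transpose_mat k' * A * transpose_mat k) ` ((\<lambda>A. ?w * A * ?w) ` upper_borel (Suc n))"
    unfolding image_image using k' kc by (intro image_cong refl) (auto simp: upper_borel_def assoc)
  also have "\<dots> = (\<lambda>A. transpose_mat k' * A * transpose_mat k) ` lower_borel (Suc n)"
    by (simp only: reversal_conj_upper_borel)
  finally have b: "b = \<dots>" .
  have "transpose_mat k' \<in> K_grp n"
    by (rule K_grp_transpose[OF K_grp_inverse[OF kK k' kk' k'k] kc k'k kk'])
  then show ?thesis
    unfolding b Q_minus_def using conj_image_in_K_orbit[of "transpose_mat k'" n "transpose_mat k"] kc tkk' tk'k
    by simp
qed

theorem proposition3p10:
  fixes n :: nat and x :: "complex mat" and b :: "complex mat set"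
  assumes "n \<ge> 1"
    and "x \<in> carrier_mat (Suc n) (Suc n)"
    and "regular_nilpotent (Suc n) x"
    and "regular_nilpotent n (upper_left n x)"
    and "embed_gl n ` centralizer n (upper_left n x) \<inter> centralizer (Suc n) x = {0\<^sub>m (Suc n) (Suc n)}"
    and "borel_subalg (Suc n) b" and "x \<in> b"
  shows "b \<in> Q_plus n \<or> b \<in> Q_minus n"
proof -
  let ?N = "upper_left n x"
  let ?A = "?N ^\<^sub>m (n - 1)"
  have xn: "x ^\<^sub>m Suc n = 0\<^sub>m (Suc n) (Suc n)" \<comment> \<open>of the regularity of \<open>x\<close> only nilpotency is used\<close>
    using nilpotent_mat_pow_dim assms(3) unfolding regular_nilpotent_def by blast
  have Nn: "?N ^\<^sub>m n = 0\<^sub>m n n"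
    using nilpotent_mat_pow_dim assms(4) unfolding regular_nilpotent_def by blast
  have Nc: "?N \<in> carrier_mat n n" by (simp add: upper_left_def)
  have "?A \<noteq> 0\<^sub>m n n" by (rule regular_nilpotent_pow_ne_zero[OF assms(4,1)])
  then have "?A *\<^sub>v vec n (\<lambda>i. x $$ (i, n)) \<noteq> 0\<^sub>v n
      \<or> transpose_mat ?A *\<^sub>v vec n (\<lambda>i. x $$ (n, i)) \<noteq> 0\<^sub>v n"
    using centralizer_border_zero[OF assms(2,5) _ pow_mat_comm[OF Nc]] Nc by auto
  then show ?thesis
    using borel_in_Q_plus_if_cyclic[OF assms(1,2) xn Nn _ assms(6,7)]
      borel_in_Q_minus_if_cocyclic[OF assms(1,2) xn Nn _ assms(6,7)] by blast
qed

end
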